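(* For every $r>0$ there exists a finite constant $C_0=C_0(r)$ such that $$Q_\varepsilon(z)\le-\frac1{2\pi}\ln(\|z\|+\varepsilon)+C_0$$ for all $0<\varepsilon<1$ and all $z\in\mathbb R\times\mathbb T$ with $\|z\|\le r$.
   Context: $\mathbb T=[-1/2,1/2)$; on $\mathbb R\times\mathbb T$, $\|(t,x)\|=|t|+d_{\mathbb T}(x,0)$. Let $\mathbf p(t,x)=\frac1\pi\frac t{x^2+t^2}$ for $t>0$, $0$ for $t\le0$; $p(t,x)=\sum_{k\in\mathbb Z}\mathbf p(t,x+k)$; fix $T_0\ge1$ and a smooth $\mathsf H:\mathbb R\to[0,1]$ equal to $1$ on $(-\infty,0]$, $0$ on $[1,\infty)$; $q(t,x)=p(t,x)\mathsf H(t-T_0)$. $\varrho$ is a nonnegative smooth function on $\mathbb R^2$ with $\varrho(-z)=\varrho(z)$, $\int\varrho=1$, supported in $[-s_0,s_0]\times(-1/4,1/4)$ for some $s_0>0$ (regarded as a function on $\mathbb R\times\mathbb T$); $\varrho_\varepsilon(w)=\varepsilon^{-2}\varrho(w/\varepsilon)$. $Q_\varepsilon(z)=\int_{\mathbb R\times\mathbb T}(q*\varrho_\varepsilon)(w)(q*\varrho_\varepsilon)(z+w)dw$, the covariance $\mathbb E[\mathfrak v_\varepsilon(0)\mathfrak v_\varepsilon(z)]$ of $\mathfrak v_\varepsilon=q*\varrho_\varepsilon*\xi$, $\xi$ space-time white noise. *)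

theory Defs
  imports "HOL-Analysis.Analysis"
begin

text \<open>Space-time R x T with T = [-1/2,1/2) is modelled by real x real, functions on it
  being 1-periodic in the second variable.\<close>

definition dT :: "real \<Rightarrow> real" where
  "dT x = \<bar>x - of_int (round x)\<bar>"

definition tnorm :: "real \<times> real \<Rightarrow> real" where
  "tnorm z = \<bar>fst z\<bar> + dT (snd z)"

definition tint :: "(real \<times> real \<Rightarrow> real) \<Rightarrow> real" where
  "tint f = (LINT w : (UNIV \<times> {-1/2..<1/2}) | lborel. f w)"

definition tconv :: "(real \<times> real \<Rightarrow> real) \<Rightarrow> (real \<times> real \<Rightarrow> real) \<Rightarrow> real \<times> real \<Rightarrow> real" where
  "tconv f g z = tint (\<lambda>w. f w * g (z - w))"

definition pbold :: "real \<Rightarrow> real \<Rightarrow> real" where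
  "pbold t x = (if t > 0 then (1/pi) * (t / (x^2 + t^2)) else 0)"

definition pker :: "real \<times> real \<Rightarrow> real" where
  "pker z = (\<Sum>\<^sub>\<infinity>k::int. pbold (fst z) (snd z + of_int k))"

definition qker :: "real \<Rightarrow> (real \<Rightarrow> real) \<Rightarrow> real \<times> real \<Rightarrow> real" where
  "qker T0 H z = pker z * H (fst z - T0)"

definition rho_eps :: "(real \<times> real \<Rightarrow> real) \<Rightarrow> real \<Rightarrow> real \<times> real \<Rightarrow> real" where
  "rho_eps \<rho> \<epsilon> z = (\<Sum>\<^sub>\<infinity>k::int. \<epsilon> powi (-2) * \<rho> ((1/\<epsilon>) *\<^sub>R (fst z, snd z + of_int k)))"

definition Qeps :: "real \<Rightarrow> (real \<Rightarrow> real) \<Rightarrow> (real \<times> real \<Rightarrow> real) \<Rightarrow> real \<Rightarrow> real \<times> real \<Rightarrow> real" where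
  "Qeps T0 H \<rho> \<epsilon> z =
     (let v = tconv (qker T0 H) (rho_eps \<rho> \<epsilon>) in tint (\<lambda>w. v w * v (z + w)))"

definition smooth1 :: "(real \<Rightarrow> real) \<Rightarrow> bool" where
  "smooth1 f \<longleftrightarrow> (\<forall>n x. (deriv ^^ n) f differentiable (at x))"

fun pdir :: "bool \<Rightarrow> (real \<times> real \<Rightarrow> real) \<Rightarrow> real \<times> real \<Rightarrow> real" where
  "pdir True f = (\<lambda>(t, x). deriv (\<lambda>s. f (s, x)) t)"
| "pdir False f = (\<lambda>(t, x). deriv (\<lambda>y. f (t, y)) x)"

definition iter_pd :: "bool list \<Rightarrow> (real \<times> real \<Rightarrow> real) \<Rightarrow> real \<times> real \<Rightarrow> real" where
  "iter_pd ds f = fold pdir ds f"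

definition smooth2 :: "(real \<times> real \<Rightarrow> real) \<Rightarrow> bool" where
  "smooth2 f \<longleftrightarrow> (\<forall>ds. continuous_on UNIV (iter_pd ds f) \<and>
      (\<forall>t x. (\<lambda>s. iter_pd ds f (s, x)) differentiable (at t) \<and>
             (\<lambda>y. iter_pd ds f (t, y)) differentiable (at x)))"

end

theory Submission
  imports Defs "HOL-Real_Asymp.Real_Asymp"
begin

text \<open>
  On one period the periodised Poisson kernel differs from the kernel \<open>p\<close> of the line by
  \<open>O(t)\<close>, so there \<open>q\<close> is dominated by \<open>q\<^sup>+ = 1\<^bsub>0<t<L\<^esub> (p + C)\<close> with \<open>L = T\<^sub>0 + 1\<close>.
  Unfolding the periodic mollifier bounds \<open>Q\<^sub>\<epsilon>(z)\<close> by an average, over \<open>y\<close> and \<open>y'\<close>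
  distributed by the rescaled mollifier, of the plane covariance
  \<open>K(u) = \<integral> q\<^sup>+(a) q\<^sup>+(a + u) da\<close> at the vertical translates of \<open>u = z + y - y'\<close>.
  The semigroup property \<open>\<integral> p(s,y) p(s+t,y+x) dy = p(2s+t,x)\<close> and the primitive
  \<open>ln (d\<^sup>2 + v\<^sup>2) / (2\<pi>)\<close> of \<open>v \<mapsto> p(v,d)\<close> give \<open>K(u) \<le> C - ln \<parallel>u\<parallel> / (2\<pi>)\<close>.
  If \<open>\<parallel>z\<parallel> \<ge> 4\<kappa>\<epsilon>\<close>, where \<open>\<kappa>\<epsilon>\<close> bounds \<open>\<parallel>y\<parallel>\<close> on the support of the mollifier, then
  \<open>\<parallel>z + y - y'\<parallel>\<close> is comparable to \<open>\<parallel>z\<parallel> + \<epsilon>\<close>. Otherwise \<open>-ln \<parallel>u\<parallel>\<close> is bounded by the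
  logarithm of the time component alone, whose singularity is integrable against the
  mollifier at the cost of \<open>-ln \<epsilon>\<close>.
\<close>

section \<open>Integration on the line and the plane\<close>

lemma nn_integral_lborel_FTC_le:
  fixes f F :: "real \<Rightarrow> real"
  assumes f_meas [measurable]: "f \<in> borel_measurable borel"
    and F_deriv: "\<And>x. (F has_real_derivative f x) (at x)" and f_nonneg: "\<And>x. 0 \<le> f x"
    and F_bot: "(F \<longlongrightarrow> A) at_bot" and F_top: "(F \<longlongrightarrow> B) at_top"
  shows "(\<integral>\<^sup>+x. ennreal (f x) \<partial>lborel) \<le> ennreal (B - A)"
proof -
  have mono: "F x \<le> F y" if "x \<le> y" for x y
    by (rule DERIV_nonneg_imp_nondecreasing[OF that]) (use F_deriv f_nonneg in blast)
  have "A \<le> F 0"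
    by (rule tendsto_upperbound[OF F_bot])
       (auto simp: eventually_at_bot_linorder intro!: exI[of _ 0] mono)
  moreover have "F 0 \<le> B"
    by (rule tendsto_lowerbound[OF F_top])
       (auto simp: eventually_at_top_linorder intro!: exI[of _ 0] mono)
  moreover have "(\<integral>\<^sup>+x. ennreal (f x) * indicator {..<0} x \<partial>lborel) \<le> ennreal (F 0 - A)"
  proof -
    have "(\<integral>\<^sup>+x. ennreal (f x) * indicator {..<0} x \<partial>lborel)
        = (\<integral>\<^sup>+x. ennreal (f (- x)) * indicator {..<0} (- x) \<partial>lborel)"
      using nn_integral_real_affine[of "\<lambda>x. ennreal (f x) * indicator {..<0} x" "-1" 0] by simp
    also have "\<dots> \<le> (\<integral>\<^sup>+x. ennreal (f (- x)) * indicator {0..} x \<partial>lborel)"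
      by (auto intro!: nn_integral_mono split: split_indicator)
    also have "\<dots> = ennreal (- A - (- F (- 0)))"
    proof (rule nn_integral_FTC_atLeast[where F="\<lambda>x. - F (- x)"])
      show "((\<lambda>x. - F (- x)) has_real_derivative f (- x)) (at x)" for x
        using DERIV_minus[OF iffD1[OF DERIV_mirror F_deriv[of "- x"]]] by simp
      show "((\<lambda>x. - F (- x)) \<longlongrightarrow> - A) at_top"
        by (intro tendsto_minus filterlim_compose[OF F_bot filterlim_uminus_at_bot_at_top])
    qed (simp_all add: f_nonneg)
    finally show ?thesis by simp
  qed
  moreover have "(\<integral>\<^sup>+x. ennreal (f x) * indicator {0..} x \<partial>lborel) = ennreal (B - F 0)"
    by (rule nn_integral_FTC_atLeast[OF f_meas F_deriv f_nonneg F_top])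
  moreover have "(\<integral>\<^sup>+x. ennreal (f x) \<partial>lborel)
      = (\<integral>\<^sup>+x. ennreal (f x) * indicator {0..} x \<partial>lborel)
        + (\<integral>\<^sup>+x. ennreal (f x) * indicator {..<0} x \<partial>lborel)"
    by (subst nn_integral_add[symmetric]) (auto intro!: nn_integral_cong split: split_indicator)
  ultimately have "(\<integral>\<^sup>+x. ennreal (f x) \<partial>lborel) \<le> ennreal (B - F 0) + ennreal (F 0 - A)"
    by (simp add: add_left_mono)
  also have "\<dots> = ennreal (B - A)"
    using \<open>A \<le> F 0\<close> \<open>F 0 \<le> B\<close> by (subst ennreal_plus[symmetric]) auto
  finally show ?thesis .
qed

lemma nn_integral_lborel_iterated:
  fixes h :: "real \<times> real \<Rightarrow> ennreal"
  assumes [measurable]: "h \<in> borel_measurable borel"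
  shows "(\<integral>\<^sup>+a. h a \<partial>lborel) = (\<integral>\<^sup>+s. \<integral>\<^sup>+y. h (s, y) \<partial>lborel \<partial>lborel)"
proof -
  have "h \<in> borel_measurable (lborel \<Otimes>\<^sub>M lborel)" by (simp add: lborel_prod)
  then show ?thesis
    by (subst lborel_prod[symmetric], subst lborel.nn_integral_fst) simp_all
qed

lemma nn_integral_lborel_translate:
  fixes f :: "'a::euclidean_space \<Rightarrow> ennreal"
  assumes [measurable]: "f \<in> borel_measurable borel"
  shows "(\<integral>\<^sup>+y. f (c + y) \<partial>lborel) = (\<integral>\<^sup>+y. f y \<partial>lborel)"
proof -
  have "(\<integral>\<^sup>+y. f y \<partial>lborel) = (\<integral>\<^sup>+y. f y \<partial>distr lborel borel ((+) c))"
    by (simp add: lborel_distr_plus)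
  also have "\<dots> = (\<integral>\<^sup>+y. f (c + y) \<partial>lborel)"
    by (rule nn_integral_distr) auto
  finally show ?thesis ..
qed

lemma nn_integral_lborel_reflect:
  fixes f :: "'a::euclidean_space \<Rightarrow> ennreal"
  assumes [measurable]: "f \<in> borel_measurable borel"
  shows "(\<integral>\<^sup>+y. f (c - y) \<partial>lborel) = (\<integral>\<^sup>+y. f y \<partial>lborel)"
proof -
  have "(\<integral>\<^sup>+y. f y \<partial>lborel)
      = (\<integral>\<^sup>+y. f y \<partial>density (distr lborel borel (\<lambda>x. c + (-1) *\<^sub>R x)) (\<lambda>_. \<bar>-1::real\<bar> ^ DIM('a)))"
    by (subst lborel_affine[of "-1" c, symmetric]) auto
  also have "\<dots> = (\<integral>\<^sup>+y. f (c - y) \<partial>lborel)"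
    by (simp add: nn_integral_density nn_integral_distr)
  finally show ?thesis ..
qed

lemma ennreal_integral_le_nn_integral:
  fixes f :: "'a \<Rightarrow> real"
  assumes "\<And>x. 0 \<le> f x" and "\<And>x. ennreal (f x) \<le> G x"
  shows "ennreal (integral\<^sup>L M f) \<le> integral\<^sup>N M G"
proof (cases "integrable M f")
  case True
  then have "ennreal (integral\<^sup>L M f) = (\<integral>\<^sup>+x. ennreal (f x) \<partial>M)"
    using assms(1) by (subst nn_integral_eq_integral) auto
  also have "\<dots> \<le> integral\<^sup>N M G" by (intro nn_integral_mono assms(2))
  finally show ?thesis .
qed (simp add: not_integrable_integral_eq)

lemma AE_lborel_fst_neq: "AE y in (lborel :: (real \<times> real) measure). fst y \<noteq> k"
proof (rule AE_I')
  have "emeasure (lborel \<Otimes>\<^sub>M lborel) ({k} \<times> (UNIV :: real set))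
      = emeasure lborel {k} * emeasure lborel (UNIV :: real set)"
    by (rule lborel.emeasure_pair_measure_Times) auto
  then show "{k} \<times> UNIV \<in> null_sets (lborel :: (real \<times> real) measure)"
    by (simp add: lborel_prod null_sets_def borel_prod[symmetric])
qed auto

lemma fst_measurable_borel [measurable]: "(fst :: real \<times> real \<Rightarrow> real) \<in> borel_measurable borel"
  by (subst borel_prod[symmetric]) (rule measurable_fst)

lemma snd_measurable_borel [measurable]: "(snd :: real \<times> real \<Rightarrow> real) \<in> borel_measurable borel"
  by (subst borel_prod[symmetric]) (rule measurable_snd)

section \<open>The circle\<close>

definition round_rem :: "real \<Rightarrow> real" where
  "round_rem x = x - of_int (round x)"

lemma round_rem_ge: "- 1/2 \<le> round_rem x" and round_rem_less: "round_rem x < 1/2"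
  using of_int_round_le[of x] of_int_round_gt[of x] by (auto simp: round_rem_def)

lemma abs_round_rem_le: "\<bar>round_rem x\<bar> \<le> 1/2"
  using round_rem_ge[of x] round_rem_less[of x] by linarith

lemma round_add_of_int: "round (x + of_int n) = round x + n"
  unfolding round_def by (metis add.commute add.left_commute floor_add_int)

lemma round_rem_add_of_int [simp]: "round_rem (x + of_int n) = round_rem x"
  by (simp add: round_rem_def round_add_of_int)

lemma round_rem_measurable [measurable]: "round_rem \<in> borel_measurable borel"
proof -
  have "round_rem = (\<lambda>x. x - of_int \<lfloor>x + 1/2\<rfloor>)"
    by (auto simp: round_rem_def round_def)
  moreover have "(\<lambda>x::real. x - of_int \<lfloor>x + 1/2\<rfloor>) \<in> borel_measurable borel"
    by measurable
  ultimately show ?thesis by simp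
qed

lemma round_in_range:
  assumes "\<bar>x\<bar> < real n + 1/2"
  shows "round x \<in> {- int n..int n}"
proof -
  have "real_of_int (round x) < real_of_int (int n + 1)" "real_of_int (- int n - 1) < real_of_int (round x)"
    using of_int_round_le[of x] of_int_round_ge[of x] assms by (auto simp: abs_less_iff)
  then show ?thesis by (simp only: of_int_less_iff) auto
qed

lemma abs_add_of_int_ge_half:
  fixes x :: real
  assumes "k \<noteq> - round x"
  shows "1/2 \<le> \<bar>x + of_int k\<bar>"
proof -
  have "1 \<le> \<bar>round x + k\<bar>" using assms by linarith
  then have "1 \<le> \<bar>real_of_int (round x + k)\<bar>" by (metis of_int_1_le_iff of_int_abs)
  moreover have "x + of_int k = round_rem x + of_int (round x + k)" by (simp add: round_rem_def)
  ultimately show ?thesis using abs_round_rem_le[of x] by linarith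
qed

lemma dT_eq_abs_round_rem: "dT x = \<bar>round_rem x\<bar>"
  by (simp add: dT_def round_rem_def)

lemma dT_nonneg: "0 \<le> dT x"
  by (simp add: dT_def)

lemma dT_le_half: "dT x \<le> 1/2"
  unfolding dT_eq_abs_round_rem by (rule abs_round_rem_le)

lemma dT_le_abs: "dT x \<le> \<bar>x\<bar>"
  using round_diff_minimal[of x 0] by (simp add: dT_def)

lemma dT_round_rem: "dT (round_rem x) = dT x"
  by (simp add: dT_def round_rem_def round_add_of_int[of x "- round x", simplified])

lemma dT_triangle: "dT (x + y) \<le> dT x + dT y"
proof -
  have "dT (x + y) \<le> \<bar>(x - of_int (round x)) + (y - of_int (round y))\<bar>"
    using round_diff_minimal[of "x + y" "round x + round y"] by (simp add: dT_def algebra_simps)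
  also have "\<dots> \<le> dT x + dT y"
    unfolding dT_def by (rule abs_triangle_ineq)
  finally show ?thesis .
qed

lemma dT_uminus: "dT (- x) = dT x"
  using round_diff_minimal[of "- x" "- round x"] round_diff_minimal[of x "- round (- x)"]
  by (simp add: dT_def abs_minus_commute)

lemma tnorm_nonneg: "0 \<le> tnorm p"
  by (simp add: tnorm_def dT_nonneg)

lemma tnorm_triangle: "tnorm (p + q) \<le> tnorm p + tnorm q"
  using dT_triangle[of "snd p" "snd q"] abs_triangle_ineq[of "fst p" "fst q"] by (simp add: tnorm_def)

lemma tnorm_uminus: "tnorm (- p) = tnorm p"
  by (simp add: tnorm_def dT_uminus)

section \<open>An integrable logarithmic singularity\<close>

definition neglog :: "real \<Rightarrow> real" where
  "neglog x = max 0 (- ln \<bar>x\<bar>)"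

lemma neglog_nonneg: "0 \<le> neglog x"
  by (simp add: neglog_def)

lemma neglog_measurable [measurable]: "neglog \<in> borel_measurable borel"
  unfolding neglog_def by measurable

lemma neglog_antimono:
  assumes "0 < \<bar>x\<bar>" "\<bar>x\<bar> \<le> \<bar>y\<bar>"
  shows "neglog y \<le> neglog x"
proof -
  have "ln \<bar>x\<bar> \<le> ln \<bar>y\<bar>" using assms by simp
  then show ?thesis by (auto simp: neglog_def max_def)
qed

lemma neglog_scale_le:
  assumes "0 < e" "e < 1"
  shows "neglog x \<le> - ln e + neglog (x / e)"
proof -
  have "ln e < 0" using assms by simp
  moreover have "- ln \<bar>x\<bar> \<le> - ln e + neglog (x / e)" if "x \<noteq> 0"
    using that assms by (simp add: neglog_def ln_div abs_divide)
  ultimately show ?thesis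
    using neglog_nonneg[of "x / e"] by (cases "x = 0") (auto simp: neglog_def)
qed

lemma has_integral_neg_ln_01: "((\<lambda>x::real. - ln x) has_integral 1) {0..1}"
proof -
  let ?F = "\<lambda>x::real. x - x * ln x"
  have "((\<lambda>x. - ln x) has_integral (?F 1 - ?F 0)) {0..1}"
  proof (rule fundamental_theorem_of_calculus_interior)
    show "continuous_on {0..1} ?F"
    proof (rule continuous_on_IccI)
      show "(?F \<longlongrightarrow> ?F 0) (at_right 0)" by simp real_asymp
      show "(?F \<longlongrightarrow> ?F 1) (at_left 1)" by (intro tendsto_intros) auto
      show "?F \<midarrow>x\<rightarrow> ?F x" if "0 < x" "x < 1" for x
        using that by (intro tendsto_intros) auto
    qed simp
    show "(?F has_vector_derivative - ln x) (at x)" if "x \<in> {0<..<1}" for x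
    proof -
      have "(?F has_real_derivative (1 - (1 * ln x + x * (1 / x)))) (at x)"
        using that by (auto intro!: derivative_eq_intros)
      then show ?thesis using that by (simp add: has_real_derivative_iff_has_vector_derivative)
    qed
  qed simp
  then show ?thesis by simp
qed

lemma nn_integral_neglog: "(\<integral>\<^sup>+x. ennreal (neglog x) \<partial>lborel) \<le> 2"
proof -
  let ?g = "\<lambda>x::real. ennreal (- ln x) * indicator {0..1} x"
  have g: "(\<integral>\<^sup>+x. ?g x \<partial>lborel) = 1"
  proof -
    have "0 \<le> - ln x" if "x \<in> {0..1::real}" for x
      using that by (cases "x = 0") auto
    then have "(\<integral>\<^sup>+x. ?g x \<partial>lborel) = ennreal 1"
      by (intro nn_integral_has_integral_lebesgue' has_integral_neg_ln_01) auto
    then show ?thesis by simp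
  qed
  have "ennreal (neglog x) \<le> ?g x + ?g (- x)" for x
    by (cases "0 < x" "x < 0" rule: bool.exhaust[case_product bool.exhaust])
       (auto simp: neglog_def indicator_def max_def)
  then have "(\<integral>\<^sup>+x. ennreal (neglog x) \<partial>lborel) \<le> (\<integral>\<^sup>+x. ?g x + ?g (- x) \<partial>lborel)"
    by (rule nn_integral_mono)
  also have "\<dots> = (\<integral>\<^sup>+x. ?g x \<partial>lborel) + (\<integral>\<^sup>+x. ?g (- x) \<partial>lborel)"
    by (rule nn_integral_add) auto
  also have "(\<integral>\<^sup>+x. ?g (- x) \<partial>lborel) = (\<integral>\<^sup>+x. ?g x \<partial>lborel)"
    using nn_integral_real_affine[of ?g "-1" 0] by simp
  finally show ?thesis by (simp add: g one_add_one)
qed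

lemma nn_integral_neglog_affine:
  assumes "0 < e"
  shows "(\<integral>\<^sup>+s. ennreal (neglog ((k - s) / e)) \<partial>lborel) \<le> ennreal (2 * e)"
proof -
  have "(\<integral>\<^sup>+s. ennreal (neglog ((k - s) / e)) \<partial>lborel)
      = \<bar>-e\<bar> * (\<integral>\<^sup>+x. ennreal (neglog ((k - (k + (-e) * x)) / e)) \<partial>lborel)"
    using assms by (intro nn_integral_real_affine) auto
  also have "\<dots> = ennreal e * (\<integral>\<^sup>+x. ennreal (neglog x) \<partial>lborel)"
    using assms by simp
  also have "\<dots> \<le> ennreal e * 2"
    by (intro mult_left_mono nn_integral_neglog) auto
  also have "\<dots> = ennreal (2 * e)"
    using assms by (simp add: ennreal_mult' mult.commute)
  finally show ?thesis .
qed

section \<open>The Poisson kernel\<close>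

lemma pbold_nonneg: "0 \<le> pbold t x"
  by (simp add: pbold_def)

lemma pbold_abs: "pbold t \<bar>x\<bar> = pbold t x"
  by (simp add: pbold_def)

lemma pbold_eq: "0 \<le> t \<Longrightarrow> pbold t x = t / (pi * (x\<^sup>2 + t\<^sup>2))"
  by (cases "t = 0") (auto simp: pbold_def)

lemma pbold_measurable [measurable]:
  assumes [measurable]: "f \<in> borel_measurable M" "g \<in> borel_measurable M"
  shows "(\<lambda>z. pbold (f z) (g z)) \<in> borel_measurable M"
  unfolding pbold_def by measurable

lemma summable_on_inverse_one_plus_square_int:
  "(\<lambda>k::int. 1 / (1 + (of_int k)\<^sup>2 :: real)) summable_on UNIV"
proof -
  let ?f = "\<lambda>k::int. 1 / (1 + (of_int k)\<^sup>2 :: real)"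
  have "summable (\<lambda>n::nat. norm (1 / (1 + (real n)\<^sup>2)))"
  proof (rule summable_comparison_test'[OF inverse_power_summable[of 2]])
    show "norm (norm (1 / (1 + (real n)\<^sup>2))) \<le> inverse (real n ^ 2)" if "1 \<le> n" for n
    proof -
      have "1 / (1 + (real n)\<^sup>2) \<le> 1 / (real n)\<^sup>2"
        using that by (intro divide_left_mono mult_pos_pos add_pos_nonneg) auto
      then show ?thesis by (simp add: inverse_eq_divide)
    qed
  qed simp
  then have nat: "(\<lambda>n::nat. 1 / (1 + (real n)\<^sup>2)) summable_on UNIV"
    by (rule norm_summable_imp_summable_on)
  have "?f summable_on range int"
    using nat by (subst summable_on_reindex) (auto simp: o_def)
  moreover have "?f summable_on range (\<lambda>n. - int n)"
    using nat by (subst summable_on_reindex) (auto simp: o_def inj_on_def)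
  moreover have "k \<in> range int \<union> range (\<lambda>n. - int n)" for k
  proof (cases "0 \<le> k")
    case True
    then show ?thesis by (intro UnI1 image_eqI[where x="nat k"]) auto
  next
    case False
    then show ?thesis by (intro UnI2 image_eqI[where x="nat (- k)"]) auto
  qed
  ultimately show ?thesis by (metis summable_on_union UNIV_eq_I)
qed

definition poisson_images_const :: real where
  "poisson_images_const = 8 / pi * (\<Sum>\<^sub>\<infinity>k::int. 1 / (1 + (of_int k)\<^sup>2))"

lemma poisson_images_const_nonneg: "0 \<le> poisson_images_const"
  unfolding poisson_images_const_def by (intro mult_nonneg_nonneg infsum_nonneg) auto

lemma pbold_image_le:
  assumes t: "0 < t" and x: "\<bar>x\<bar> \<le> 1/2" and k: "k \<noteq> 0"
  shows "pbold t (x + of_int k) \<le> t * (8 / pi * (1 / (1 + (of_int k)\<^sup>2)))"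
proof -
  have k1: "1 \<le> \<bar>real_of_int k\<bar>" using k by linarith
  then have k2: "1 \<le> (real_of_int k)\<^sup>2" using power_mono[OF k1, of 2] by simp
  have "\<bar>of_int k\<bar> / 2 \<le> \<bar>x + of_int k\<bar>"
    using x k1 by (auto simp: abs_if split: if_split_asm)
  then have "(of_int k)\<^sup>2 / 4 \<le> (x + of_int k)\<^sup>2"
    using power_mono[of "\<bar>of_int k\<bar> / 2" "\<bar>x + of_int k\<bar>" 2] by (simp add: power_divide)
  then have "(1 + (of_int k)\<^sup>2) / 8 \<le> (x + of_int k)\<^sup>2 + t\<^sup>2"
    using k2 zero_le_power2[of t] by (simp add: field_simps; linarith)
  then have "pbold t (x + of_int k) \<le> t / (pi * ((1 + (of_int k)\<^sup>2) / 8))"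
    unfolding pbold_eq[OF less_imp_le[OF t]] by (intro frac_le) (use t in \<open>auto simp: add_pos_nonneg\<close>)
  then show ?thesis by (simp add: field_simps)
qed

lemma pker_le:
  assumes t: "0 < t" and x: "\<bar>x\<bar> \<le> 1/2"
  shows "pker (t, x) \<le> pbold t x + t * poisson_images_const"
proof -
  let ?main = "\<lambda>k::int. if k = 0 then pbold t x else 0"
  let ?tail = "\<lambda>k::int. t * (8 / pi * (1 / (1 + (of_int k)\<^sup>2)))"
  have main: "(?main has_sum pbold t x) UNIV"
    by (rule has_sum_finite_neutralI[where B="{0}"]) auto
  have tail: "(?tail has_sum t * poisson_images_const) UNIV"
    unfolding poisson_images_const_def mult.assoc[symmetric]
    by (intro has_sum_cmult_right has_sum_infsum summable_on_inverse_one_plus_square_int)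
  have sum: "((\<lambda>k. ?main k + ?tail k) has_sum pbold t x + t * poisson_images_const) UNIV"
    by (rule has_sum_add[OF main tail])
  have le: "pbold t (x + of_int k) \<le> ?main k + ?tail k" for k
    using pbold_image_le[OF t x, of k] t by (cases "k = 0") (auto simp: pbold_nonneg)
  have "(\<lambda>k. pbold t (x + of_int k)) summable_on UNIV"
    by (rule summable_on_comparison_test[OF has_sum_imp_summable[OF sum] le pbold_nonneg])
  then show ?thesis
    unfolding pker_def fst_conv snd_conv by (rule has_sum_mono[OF has_sum_infsum sum le])
qed

lemma pker_nonneg: "0 \<le> pker z"
  unfolding pker_def by (intro infsum_nonneg) (simp add: pbold_nonneg)

lemma pker_nonpos_time: "t \<le> 0 \<Longrightarrow> pker (t, x) = 0"
  by (simp add: pker_def pbold_def)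

lemma nn_integral_pbold_le:
  assumes "0 < s"
  shows "(\<integral>\<^sup>+y. ennreal (pbold s (y + w)) \<partial>lborel) \<le> 1"
proof -
  have "(\<integral>\<^sup>+y. ennreal (pbold s y) \<partial>lborel) \<le> ennreal (1/2 - (- 1/2))"
  proof (rule nn_integral_lborel_FTC_le[where F="\<lambda>y. arctan (y / s) / pi"])
    show "((\<lambda>y. arctan (y / s) / pi) has_real_derivative pbold s y) (at y)" for y
    proof -
      have "((\<lambda>y. arctan (y / s) / pi) has_real_derivative inverse (1 + (y / s)\<^sup>2) * (1 / s) / pi) (at y)"
        using assms by (auto intro!: derivative_eq_intros)
      moreover have "inverse (1 + (y / s)\<^sup>2) * (1 / s) / pi = pbold s y"
        using assms by (simp add: pbold_eq field_simps power2_eq_square)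
      ultimately show ?thesis by simp
    qed
    show "((\<lambda>y. arctan (y / s) / pi) \<longlongrightarrow> - 1 / 2) at_bot" using assms by real_asymp
    show "((\<lambda>y. arctan (y / s) / pi) \<longlongrightarrow> 1 / 2) at_top" using assms by real_asymp
  qed (simp_all add: pbold_nonneg)
  moreover have "(\<integral>\<^sup>+y. ennreal (pbold s (y + w)) \<partial>lborel) = (\<integral>\<^sup>+y. ennreal (pbold s y) \<partial>lborel)"
    using nn_integral_real_affine[of "\<lambda>y. ennreal (pbold s y)" 1 w] by (simp add: add.commute)
  ultimately show ?thesis by simp
qed

text \<open>Partial fractions of \<^term>\<open>pbold a y * pbold b (y + x)\<close> as a function of \<open>y\<close>.\<close>

definition poisson_prod_prim :: "real \<Rightarrow> real \<Rightarrow> real \<Rightarrow> real \<Rightarrow> real" where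
  "poisson_prod_prim a b x y =
     a * b / (pi\<^sup>2 * ((x\<^sup>2 + (a + b)\<^sup>2) * (x\<^sup>2 + (a - b)\<^sup>2))) *
     ((x\<^sup>2 + b\<^sup>2 - a\<^sup>2) / a * arctan (y / a) + (x\<^sup>2 + a\<^sup>2 - b\<^sup>2) / b * arctan ((y + x) / b)
      - x * (ln (y\<^sup>2 + a\<^sup>2) - ln ((y + x)\<^sup>2 + b\<^sup>2)))"

lemma poisson_prod_prim_deriv:
  assumes a: "0 < a" and b: "0 < b" and nd: "a \<noteq> b \<or> x \<noteq> 0"
  shows "(poisson_prod_prim a b x has_real_derivative pbold a y * pbold b (y + x)) (at y)"
proof -
  define P Q \<Delta> where "P = x\<^sup>2 + b\<^sup>2 - a\<^sup>2" and "Q = x\<^sup>2 + a\<^sup>2 - b\<^sup>2"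
    and "\<Delta> = (x\<^sup>2 + (a + b)\<^sup>2) * (x\<^sup>2 + (a - b)\<^sup>2)"
  define U V where "U = y\<^sup>2 + a\<^sup>2" and "V = (y + x)\<^sup>2 + b\<^sup>2"
  have U: "0 < U" and V: "0 < V"
    using a b by (simp_all add: U_def V_def add_nonneg_pos)
  have \<Delta>: "0 < \<Delta>"
    using a b nd by (auto simp: \<Delta>_def add_nonneg_pos add_pos_nonneg intro!: mult_pos_pos)
  have d1: "((\<lambda>y. arctan (y / a)) has_real_derivative a / U) (at y)"
  proof -
    have "((\<lambda>y. arctan (y / a)) has_real_derivative inverse (1 + (y / a)\<^sup>2) * (1 / a)) (at y)"
      using a by (auto intro!: derivative_eq_intros)
    then show ?thesis using a U by (simp add: U_def field_simps power2_eq_square)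
  qed
  have d2: "((\<lambda>y. arctan ((y + x) / b)) has_real_derivative b / V) (at y)"
  proof -
    have "((\<lambda>y. arctan ((y + x) / b)) has_real_derivative inverse (1 + ((y + x) / b)\<^sup>2) * ((1 + 0) / b)) (at y)"
      using b by (auto intro!: derivative_eq_intros)
    then show ?thesis using b V by (simp add: V_def field_simps power2_eq_square)
  qed
  have d3: "((\<lambda>y. ln (y\<^sup>2 + a\<^sup>2)) has_real_derivative 2 * y / U) (at y)"
    using U by (auto intro!: derivative_eq_intros simp: U_def)
  have d4: "((\<lambda>y. ln ((y + x)\<^sup>2 + b\<^sup>2)) has_real_derivative 2 * (y + x) / V) (at y)"
    using V by (auto intro!: derivative_eq_intros simp: V_def)
  have deriv: "(poisson_prod_prim a b x has_real_derivative
      a * b / (pi\<^sup>2 * \<Delta>) * (P / a * (a / U) + Q / b * (b / V) - x * (2 * y / U - 2 * (y + x) / V))) (at y)"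
    unfolding poisson_prod_prim_def P_def[symmetric] Q_def[symmetric] \<Delta>_def[symmetric]
    by (intro DERIV_cmult DERIV_add DERIV_diff d1 d2 d3 d4)
  moreover have "P * V + Q * U - 2 * x * (y * V - (y + x) * U) = \<Delta>"
    unfolding P_def Q_def U_def V_def \<Delta>_def by (simp add: power2_eq_square algebra_simps)
  moreover have "P / a * (a / U) + Q / b * (b / V) - x * (2 * y / U - 2 * (y + x) / V)
      = (P * V + Q * U - 2 * x * (y * V - (y + x) * U)) / (U * V)"
    using a b U V by (simp add: field_simps)
  ultimately have E: "P / a * (a / U) + Q / b * (b / V) - x * (2 * y / U - 2 * (y + x) / V) = \<Delta> / (U * V)"
    by simp
  have "a * b / (pi\<^sup>2 * \<Delta>) * (\<Delta> / (U * V)) = pbold a y * pbold b (y + x)"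
    using a b U V \<Delta> by (simp add: pbold_eq U_def V_def power2_eq_square)
  with deriv show ?thesis by (simp only: E)
qed

lemma nn_integral_poisson_semigroup_le:
  assumes a: "0 < a" and b: "0 < b" and nd: "a \<noteq> b \<or> x \<noteq> 0"
  shows "(\<integral>\<^sup>+y. ennreal (pbold a y * pbold b (y + x)) \<partial>lborel) \<le> ennreal (pbold (a + b) x)"
proof -
  define P Q \<Delta> where "P = x\<^sup>2 + b\<^sup>2 - a\<^sup>2" and "Q = x\<^sup>2 + a\<^sup>2 - b\<^sup>2"
    and "\<Delta> = (x\<^sup>2 + (a + b)\<^sup>2) * (x\<^sup>2 + (a - b)\<^sup>2)"
  define c where "c = a * b / (pi\<^sup>2 * \<Delta>)"
  have F: "poisson_prod_prim a b x = (\<lambda>y. c * (P / a * arctan (y / a) + Q / b * arctan ((y + x) / b)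
      - x * (ln (y\<^sup>2 + a\<^sup>2) - ln ((y + x)\<^sup>2 + b\<^sup>2))))"
    by (simp add: poisson_prod_prim_def c_def P_def Q_def \<Delta>_def fun_eq_iff)
  have "(\<integral>\<^sup>+y. ennreal (pbold a y * pbold b (y + x)) \<partial>lborel)
      \<le> ennreal (c * (P / a * (pi / 2) + Q / b * (pi / 2) - x * 0)
                 - c * (P / a * - (pi / 2) + Q / b * - (pi / 2) - x * 0))"
  proof (rule nn_integral_lborel_FTC_le[OF _ poisson_prod_prim_deriv[OF a b nd]])
    have lims: "((\<lambda>y. ln (y\<^sup>2 + a\<^sup>2) - ln ((y + x)\<^sup>2 + b\<^sup>2)) \<longlongrightarrow> 0) at_top"
      "((\<lambda>y. ln (y\<^sup>2 + a\<^sup>2) - ln ((y + x)\<^sup>2 + b\<^sup>2)) \<longlongrightarrow> 0) at_bot"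
      "((\<lambda>y. arctan (y / a)) \<longlongrightarrow> pi / 2) at_top" "((\<lambda>y. arctan ((y + x) / b)) \<longlongrightarrow> pi / 2) at_top"
      "((\<lambda>y. arctan (y / a)) \<longlongrightarrow> - (pi / 2)) at_bot" "((\<lambda>y. arctan ((y + x) / b)) \<longlongrightarrow> - (pi / 2)) at_bot"
      using a b by real_asymp+
    show "(poisson_prod_prim a b x \<longlongrightarrow> c * (P / a * (pi / 2) + Q / b * (pi / 2) - x * 0)) at_top"
      "(poisson_prod_prim a b x \<longlongrightarrow> c * (P / a * - (pi / 2) + Q / b * - (pi / 2) - x * 0)) at_bot"
      unfolding F by (intro tendsto_intros lims)+
  qed (simp_all add: pbold_nonneg)
  also have "c * (P / a * (pi / 2) + Q / b * (pi / 2) - x * 0)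
             - c * (P / a * - (pi / 2) + Q / b * - (pi / 2) - x * 0) = pbold (a + b) x"
  proof -
    have D1: "0 < x\<^sup>2 + (a + b)\<^sup>2" and D2: "0 < x\<^sup>2 + (a - b)\<^sup>2"
      using a b nd by (auto simp: add_nonneg_pos add_pos_nonneg)
    then have "\<Delta> \<noteq> 0" unfolding \<Delta>_def by (metis mult_pos_pos less_irrefl)
    have "c * (P / a * (pi / 2) + Q / b * (pi / 2) - x * 0)
             - c * (P / a * - (pi / 2) + Q / b * - (pi / 2) - x * 0) = c * (pi * (P / a + Q / b))"
      by (simp add: algebra_simps)
    also have "\<dots> = (b * P + a * Q) / (pi * \<Delta>)"
      using a b \<open>\<Delta> \<noteq> 0\<close> by (simp add: c_def field_simps power2_eq_square)
    also have "b * P + a * Q = (a + b) * (x\<^sup>2 + (a - b)\<^sup>2)"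
      unfolding P_def Q_def by (simp add: power2_eq_square algebra_simps)
    also have "(a + b) * (x\<^sup>2 + (a - b)\<^sup>2) / (pi * \<Delta>) = (a + b) / (pi * (x\<^sup>2 + (a + b)\<^sup>2))"
      using nd by (auto simp: \<Delta>_def)
    also have "\<dots> = pbold (a + b) x"
      using a b by (simp add: pbold_eq)
    finally show ?thesis .
  qed
  finally show ?thesis .
qed

lemma nn_integral_pbold_time:
  assumes "0 \<le> lo" "lo \<le> hi" and nd: "0 < lo \<or> d \<noteq> 0"
  shows "(\<integral>\<^sup>+u. ennreal (pbold u d) * indicator {lo..hi} u \<partial>lborel)
     = ennreal ((ln (d\<^sup>2 + hi\<^sup>2) - ln (d\<^sup>2 + lo\<^sup>2)) / (2 * pi))"
proof -
  have pos: "0 < d\<^sup>2 + u\<^sup>2" if "lo \<le> u" for u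
    using that nd assms(1) by (auto simp: add_pos_nonneg add_nonneg_pos)
  have "(\<integral>\<^sup>+u. ennreal (pbold u d) * indicator {lo..hi} u \<partial>lborel)
     = ennreal (ln (d\<^sup>2 + hi\<^sup>2) / (2 * pi) - ln (d\<^sup>2 + lo\<^sup>2) / (2 * pi))"
  proof (rule nn_integral_FTC_Icc[OF _ _ _ assms(2)])
    show "((\<lambda>u. ln (d\<^sup>2 + u\<^sup>2) / (2 * pi)) has_real_derivative pbold u d) (at u)"
      if u: "u \<in> {lo..hi}" for u
    proof -
      have "((\<lambda>u. ln (d\<^sup>2 + u\<^sup>2) / (2 * pi)) has_real_derivative (2 * u) / (d\<^sup>2 + u\<^sup>2) / (2 * pi)) (at u)"
        using pos u by (auto intro!: derivative_eq_intros simp: power2_eq_square)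
      moreover have "(2 * u) / (d\<^sup>2 + u\<^sup>2) / (2 * pi) = pbold u d"
        using u assms(1) by (simp add: pbold_eq)
      ultimately show ?thesis by simp
    qed
  qed (simp_all add: pbold_nonneg)
  then show ?thesis by (simp add: diff_divide_distrib)
qed

section \<open>A majorant of the truncated kernel and its covariance\<close>

definition qmaj :: "real \<Rightarrow> real \<Rightarrow> real \<times> real \<Rightarrow> real" where
  "qmaj L C a = (if 0 < fst a \<and> fst a < L
     then pbold (fst a) (snd a) + C * indicator {-1/2..1/2} (snd a) else 0)"

definition qmaj_cov :: "real \<Rightarrow> real \<Rightarrow> real \<times> real \<Rightarrow> ennreal" where
  "qmaj_cov L C u = (\<integral>\<^sup>+a. ennreal (qmaj L C a) * ennreal (qmaj L C (a + u)) \<partial>lborel)"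

definition time_overlap :: "real \<Rightarrow> real \<Rightarrow> real set" where
  "time_overlap L t = {s. 0 < s \<and> s < L \<and> 0 < s + t \<and> s + t < L}"

lemma qmaj_measurable [measurable]: "qmaj L C \<in> borel_measurable borel"
  unfolding qmaj_def by measurable

lemma qmaj_nonneg: "0 \<le> C \<Longrightarrow> 0 \<le> qmaj L C a"
  by (simp add: qmaj_def pbold_nonneg)

lemma time_overlap_measurable [measurable]: "time_overlap L t \<in> sets borel"
  unfolding time_overlap_def by measurable

lemma qmaj_product_le:
  assumes "s \<in> time_overlap L t" and C: "0 \<le> C"
  shows "qmaj L C (s, y) * qmaj L C (s + t, y + w)
    \<le> pbold s y * pbold (s + t) (y + w) + C * pbold (s + t) (y + w) + C * pbold s y
      + C\<^sup>2 * indicator {-1/2..1/2} y"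
proof -
  let ?i = "\<lambda>y::real. indicator {-1/2..1/2::real} y :: real"
  have i: "0 \<le> ?i y" "?i y \<le> 1" "0 \<le> ?i (y + w)" "?i (y + w) \<le> 1"
    by (auto simp: indicator_def)
  have p: "0 \<le> pbold s y" "0 \<le> pbold (s + t) (y + w)"
    by (auto simp: pbold_nonneg)
  have "qmaj L C (s, y) * qmaj L C (s + t, y + w)
      = pbold s y * pbold (s + t) (y + w) + C * (?i y * pbold (s + t) (y + w))
        + C * (pbold s y * ?i (y + w)) + C\<^sup>2 * (?i y * ?i (y + w))"
    using assms by (simp add: qmaj_def time_overlap_def algebra_simps power2_eq_square)
  also have "\<dots> \<le> pbold s y * pbold (s + t) (y + w) + C * pbold (s + t) (y + w)
      + C * pbold s y + C\<^sup>2 * ?i y"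
    using mult_left_mono[OF mult_left_le_one_le[OF p(2) i(1,2)] C]
      mult_left_mono[OF mult_right_le_one_le[OF p(1) i(3,4)] C]
      mult_left_mono[OF mult_right_le_one_le[OF i(1) i(3,4)] zero_le_power2[of C]]
    by linarith
  finally show ?thesis .
qed

lemma qmaj_slice_cov_le:
  assumes s: "s \<in> time_overlap L t" and nd: "t \<noteq> 0 \<or> w \<noteq> 0" and C: "0 \<le> C"
  shows "(\<integral>\<^sup>+y. ennreal (qmaj L C (s, y)) * ennreal (qmaj L C (s + t, y + w)) \<partial>lborel)
     \<le> ennreal (pbold (2 * s + t) w) + ennreal (2 * C + C\<^sup>2)"
proof -
  have st: "0 < s" "0 < s + t" using s by (auto simp: time_overlap_def)
  let ?i = "\<lambda>y::real. indicator {-1/2..1/2::real} y :: real"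
  have "(\<integral>\<^sup>+y. ennreal (qmaj L C (s, y)) * ennreal (qmaj L C (s + t, y + w)) \<partial>lborel)
     \<le> (\<integral>\<^sup>+y. ennreal (pbold s y * pbold (s + t) (y + w)) + ennreal C * ennreal (pbold (s + t) (y + w))
       + ennreal C * ennreal (pbold s y) + ennreal (C\<^sup>2) * indicator {-1/2..1/2} y \<partial>lborel)"
  proof (rule nn_integral_mono)
    fix y
    have "ennreal (qmaj L C (s, y)) * ennreal (qmaj L C (s + t, y + w))
      \<le> ennreal (pbold s y * pbold (s + t) (y + w) + C * pbold (s + t) (y + w) + C * pbold s y
          + C\<^sup>2 * indicator {-1/2..1/2} y)"
      unfolding ennreal_mult[OF qmaj_nonneg[OF C] qmaj_nonneg[OF C], symmetric]
      by (rule ennreal_leI[OF qmaj_product_le[OF s C]])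
    also have "\<dots> = ennreal (pbold s y * pbold (s + t) (y + w)) + ennreal C * ennreal (pbold (s + t) (y + w))
       + ennreal C * ennreal (pbold s y) + ennreal (C\<^sup>2) * indicator {-1/2..1/2} y"
      using C by (simp add: ennreal_mult ennreal_indicator pbold_nonneg)
    finally show "ennreal (qmaj L C (s, y)) * ennreal (qmaj L C (s + t, y + w))
      \<le> ennreal (pbold s y * pbold (s + t) (y + w)) + ennreal C * ennreal (pbold (s + t) (y + w))
       + ennreal C * ennreal (pbold s y) + ennreal (C\<^sup>2) * indicator {-1/2..1/2} y" .
  qed
  also have "\<dots> = (\<integral>\<^sup>+y. ennreal (pbold s y * pbold (s + t) (y + w)) \<partial>lborel)
      + ennreal C * (\<integral>\<^sup>+y. ennreal (pbold (s + t) (y + w)) \<partial>lborel)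
      + ennreal C * (\<integral>\<^sup>+y. ennreal (pbold s (y + 0)) \<partial>lborel)
      + ennreal (C\<^sup>2) * emeasure lborel {-1/2..1/2::real}"
    by (simp add: nn_integral_add nn_integral_cmult nn_integral_cmult_indicator)
  also have "\<dots> \<le> ennreal (pbold (s + (s + t)) w) + ennreal C * 1 + ennreal C * 1 + ennreal (C\<^sup>2) * 1"
    using nd st
    by (intro add_mono mult_left_mono nn_integral_poisson_semigroup_le nn_integral_pbold_le) auto
  also have "\<dots> = ennreal (pbold (2 * s + t) w) + ennreal (2 * C + C\<^sup>2)"
    using C by (simp add: ennreal_plus[symmetric] add.assoc del: ennreal_plus)
  finally show ?thesis .
qed

lemma qmaj_cov_le_time_integral:
  assumes nd: "t \<noteq> 0 \<or> w \<noteq> 0" and C: "0 \<le> C"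
  shows "qmaj_cov L C (t, w) \<le> (\<integral>\<^sup>+s. indicator (time_overlap L t) s
            * (ennreal (pbold (2 * s + t) w) + ennreal (2 * C + C\<^sup>2)) \<partial>lborel)"
proof -
  have "qmaj_cov L C (t, w)
      = (\<integral>\<^sup>+s. \<integral>\<^sup>+y. ennreal (qmaj L C (s, y)) * ennreal (qmaj L C (s + t, y + w)) \<partial>lborel \<partial>lborel)"
    unfolding qmaj_cov_def by (subst nn_integral_lborel_iterated) simp_all
  also have "\<dots> \<le> (\<integral>\<^sup>+s. indicator (time_overlap L t) s
            * (ennreal (pbold (2 * s + t) w) + ennreal (2 * C + C\<^sup>2)) \<partial>lborel)"
  proof (rule nn_integral_mono)
    fix s
    show "(\<integral>\<^sup>+y. ennreal (qmaj L C (s, y)) * ennreal (qmaj L C (s + t, y + w)) \<partial>lborel)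
        \<le> indicator (time_overlap L t) s * (ennreal (pbold (2 * s + t) w) + ennreal (2 * C + C\<^sup>2))"
    proof (cases "s \<in> time_overlap L t")
      case True
      then show ?thesis using qmaj_slice_cov_le[OF True nd C] by simp
    next
      case False
      then have "ennreal (qmaj L C (s, y)) * ennreal (qmaj L C (s + t, y + w)) = 0" for y
        by (auto simp: qmaj_def time_overlap_def)
      then have "(\<integral>\<^sup>+y. ennreal (qmaj L C (s, y)) * ennreal (qmaj L C (s + t, y + w)) \<partial>lborel)
          = (\<integral>\<^sup>+y. 0 \<partial>(lborel :: real measure))"
        by (intro nn_integral_cong) blast
      then show ?thesis by simp
    qed
  qed
  finally show ?thesis .
qed

lemma sum_pbold_translates_le:
  assumes x: "\<bar>x\<bar> < 1" and v: "0 < v"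
  shows "(\<Sum>m\<in>{-2..2::int}. pbold v (x + of_int m)) \<le> pbold v (dT x) + 16 * v / pi"
proof -
  define m0 where "m0 = - round x"
  have m0: "m0 \<in> {-2..2}"
    using round_in_range[of x 1] x by (auto simp: m0_def)
  have "pbold v (x + of_int m0) = pbold v (dT x)"
    by (simp add: m0_def dT_eq_abs_round_rem pbold_abs round_rem_def)
  moreover have "pbold v (x + of_int m) \<le> 4 * v / pi" if "m \<noteq> m0" for m
  proof -
    have "1/2 \<le> \<bar>x + of_int m\<bar>"
      using that by (intro abs_add_of_int_ge_half) (simp add: m0_def)
    then have "1/4 \<le> (x + of_int m)\<^sup>2"
      using power_mono[of "1/2" "\<bar>x + of_int m\<bar>" 2] by (simp add: power2_eq_square)
    then have "pbold v (x + of_int m) \<le> v / (pi * (1/4))"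
      unfolding pbold_eq[OF less_imp_le[OF v]] using v by (intro frac_le) (auto intro!: mult_left_mono simp: add_increasing2)
    then show ?thesis by (simp add: mult.commute)
  qed
  then have "(\<Sum>m\<in>{-2..2::int} - {m0}. pbold v (x + of_int m)) \<le> of_nat (card ({-2..2::int} - {m0})) * (4 * v / pi)"
    by (intro sum_bounded_above) auto
  moreover have "card ({-2..2::int} - {m0}) = 4"
    using m0 by (simp add: card_Diff_singleton)
  moreover have "(\<Sum>m\<in>{-2..2::int}. pbold v (x + of_int m))
      = pbold v (x + of_int m0) + (\<Sum>m\<in>{-2..2::int} - {m0}. pbold v (x + of_int m))"
    by (rule sum.remove[OF _ m0]) simp
  ultimately show ?thesis by simp
qed

lemma dT_of_int [simp]: "dT (of_int k) = 0"
  by (simp add: dT_def)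

lemma sum_time_integrands_le:
  assumes x: "\<bar>x\<bar> < 1" and c: "0 \<le> c"
  shows "(\<Sum>m\<in>{-2..2::int}. indicator (time_overlap L t) s
            * (ennreal (pbold (2 * s + t) (x + of_int m)) + ennreal c))
    \<le> indicator (time_overlap L t) s * (ennreal (pbold (2 * s + t) (dT x)) + ennreal (32 * L / pi + 5 * c))"
proof (cases "s \<in> time_overlap L t")
  case True
  then have v: "0 < 2 * s + t" "2 * s + t < 2 * L" by (auto simp: time_overlap_def)
  have "16 * (2 * s + t) / pi \<le> 32 * L / pi" using v(2) by (simp add: divide_right_mono)
  moreover have "(\<Sum>m\<in>{-2..2::int}. pbold (2 * s + t) (x + of_int m) + c)
      = (\<Sum>m\<in>{-2..2::int}. pbold (2 * s + t) (x + of_int m)) + 5 * c"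
    by (simp add: sum.distrib)
  ultimately have "(\<Sum>m\<in>{-2..2::int}. pbold (2 * s + t) (x + of_int m) + c)
      \<le> pbold (2 * s + t) (dT x) + (32 * L / pi + 5 * c)"
    using sum_pbold_translates_le[OF x v(1)] by linarith
  then show ?thesis
    using True c v by (simp add: ennreal_plus[symmetric] pbold_nonneg sum_nonneg del: ennreal_plus)
qed simp

lemma sum_qmaj_cov_le:
  assumes x: "\<bar>x\<bar> < 1" and nd: "t \<noteq> 0 \<or> dT x \<noteq> 0" and C: "0 \<le> C"
  shows "(\<Sum>m\<in>{-2..2::int}. qmaj_cov L C (t, x + of_int m))
    \<le> (\<integral>\<^sup>+s. indicator (time_overlap L t) s
          * (ennreal (pbold (2 * s + t) (dT x)) + ennreal (32 * L / pi + 5 * (2 * C + C\<^sup>2))) \<partial>lborel)"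
proof -
  have "t \<noteq> 0 \<or> x + of_int m \<noteq> 0" for m :: int
  proof (rule ccontr)
    assume "\<not> (t \<noteq> 0 \<or> x + of_int m \<noteq> 0)"
    then have "t = 0" "x = of_int (- m)" by auto
    then show False using nd by (metis dT_of_int)
  qed
  then have "(\<Sum>m\<in>{-2..2::int}. qmaj_cov L C (t, x + of_int m))
      \<le> (\<Sum>m\<in>{-2..2::int}. \<integral>\<^sup>+s. indicator (time_overlap L t) s
          * (ennreal (pbold (2 * s + t) (x + of_int m)) + ennreal (2 * C + C\<^sup>2)) \<partial>lborel)"
    by (intro sum_mono qmaj_cov_le_time_integral C)
  also have "\<dots> = (\<integral>\<^sup>+s. (\<Sum>m\<in>{-2..2::int}. indicator (time_overlap L t) s
          * (ennreal (pbold (2 * s + t) (x + of_int m)) + ennreal (2 * C + C\<^sup>2))) \<partial>lborel)"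
    by (rule nn_integral_sum[symmetric]) simp
  also have "\<dots> \<le> (\<integral>\<^sup>+s. indicator (time_overlap L t) s
          * (ennreal (pbold (2 * s + t) (dT x)) + ennreal (32 * L / pi + 5 * (2 * C + C\<^sup>2))) \<partial>lborel)"
    using C by (intro nn_integral_mono sum_time_integrands_le[OF x]) simp
  finally show ?thesis .
qed

lemma ln_ratio_le_neglog:
  assumes d: "0 \<le> d" "d \<le> 1/2" and L: "1 \<le> L" and n: "0 < \<bar>t\<bar> + d"
  shows "(ln (d\<^sup>2 + (2 * L)\<^sup>2) - ln (d\<^sup>2 + t\<^sup>2)) / (4 * pi)
    \<le> ln (1/2 + 8 * L\<^sup>2) / (4 * pi) + neglog (\<bar>t\<bar> + d) / (2 * pi)"
proof -
  define n where "n = \<bar>t\<bar> + d"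
  have sq: "n\<^sup>2 \<le> 2 * (d\<^sup>2 + t\<^sup>2)"
    using zero_le_power2[of "\<bar>t\<bar> - d"] by (simp add: n_def power2_eq_square algebra_simps)
  have "0 < n\<^sup>2" using n by (simp add: n_def)
  then have "0 < 2 * (d\<^sup>2 + t\<^sup>2)" using sq by (rule less_le_trans)
  then have "0 < d\<^sup>2 + t\<^sup>2" by simp
  then have "ln (n\<^sup>2) \<le> ln (2 * (d\<^sup>2 + t\<^sup>2))"
    using sq \<open>0 < n\<^sup>2\<close> by (subst ln_le_cancel_iff) auto
  moreover have "ln (n\<^sup>2) = 2 * ln n" using n by (simp add: n_def ln_realpow)
  moreover have "ln (2 * (d\<^sup>2 + t\<^sup>2)) = ln 2 + ln (d\<^sup>2 + t\<^sup>2)"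
    using \<open>0 < d\<^sup>2 + t\<^sup>2\<close> by (intro ln_mult_pos) auto
  ultimately have "2 * ln n \<le> ln 2 + ln (d\<^sup>2 + t\<^sup>2)" by simp
  moreover have "ln (d\<^sup>2 + (2 * L)\<^sup>2) + ln 2 \<le> ln (1/2 + 8 * L\<^sup>2)"
  proof -
    have "d\<^sup>2 \<le> 1/4" using d power_mono[of d "1/2" 2] by (simp add: power2_eq_square)
    then have "2 * (d\<^sup>2 + (2 * L)\<^sup>2) \<le> 1/2 + 8 * L\<^sup>2" by (simp add: power2_eq_square)
    moreover have "0 < d\<^sup>2 + (2 * L)\<^sup>2" using L by (simp add: add_nonneg_pos)
    ultimately have "ln (2 * (d\<^sup>2 + (2 * L)\<^sup>2)) \<le> ln (1/2 + 8 * L\<^sup>2)" by simp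
    moreover have "ln (2 * (d\<^sup>2 + (2 * L)\<^sup>2)) = ln (d\<^sup>2 + (2 * L)\<^sup>2) + ln 2"
      using \<open>0 < d\<^sup>2 + (2 * L)\<^sup>2\<close> by (subst ln_mult_pos) auto
    ultimately show ?thesis by simp
  qed
  moreover have "- ln n \<le> neglog n" using n by (simp add: n_def neglog_def)
  ultimately have "ln (d\<^sup>2 + (2 * L)\<^sup>2) - ln (d\<^sup>2 + t\<^sup>2) \<le> ln (1/2 + 8 * L\<^sup>2) + 2 * neglog n"
    by linarith
  then have "(ln (d\<^sup>2 + (2 * L)\<^sup>2) - ln (d\<^sup>2 + t\<^sup>2)) / (4 * pi)
      \<le> (ln (1/2 + 8 * L\<^sup>2) + 2 * neglog n) / (4 * pi)"
    by (rule divide_right_mono) simp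
  also have "\<dots> = ln (1/2 + 8 * L\<^sup>2) / (4 * pi) + neglog n / (2 * pi)"
    by (simp add: add_divide_distrib)
  finally show ?thesis by (simp add: n_def)
qed

lemma ln_cov_const_nonneg:
  fixes L :: real
  assumes "1 \<le> L"
  shows "0 \<le> ln (1/2 + 8 * L\<^sup>2)"
proof -
  have "1 \<le> L\<^sup>2" using power_mono[OF assms, of 2] by simp
  then show ?thesis by simp
qed

lemma nn_integral_time_overlap_pbold_le:
  assumes d: "0 \<le> d" "d \<le> 1/2" and L: "1 \<le> L" and n: "0 < \<bar>t\<bar> + d"
  shows "(\<integral>\<^sup>+s. indicator (time_overlap L t) s * ennreal (pbold (2 * s + t) d) \<partial>lborel)
    \<le> ennreal (ln (1/2 + 8 * L\<^sup>2) / (4 * pi) + neglog (\<bar>t\<bar> + d) / (2 * pi))"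
proof -
  let ?g = "\<lambda>v. ennreal (pbold v d) * indicator {\<bar>t\<bar>..2 * L} v"
  let ?R = "if \<bar>t\<bar> \<le> 2 * L then (ln (d\<^sup>2 + (2 * L)\<^sup>2) - ln (d\<^sup>2 + t\<^sup>2)) / (2 * pi) else 0"
  have "(\<integral>\<^sup>+s. indicator (time_overlap L t) s * ennreal (pbold (2 * s + t) d) \<partial>lborel)
      \<le> (\<integral>\<^sup>+s. ?g (t + 2 * s) \<partial>lborel)"
    by (intro nn_integral_mono) (auto simp: time_overlap_def indicator_def add.commute)
  also have "\<dots> = ennreal (1/2) * (\<integral>\<^sup>+v. ?g v \<partial>lborel)"
  proof -
    have "ennreal (1/2) * 2 = ennreal (1/2) * ennreal 2" by simp
    also have "\<dots> = ennreal (1/2 * 2)" by (subst ennreal_mult[symmetric]) auto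
    also have "\<dots> = 1" by simp
    finally show ?thesis
      using nn_integral_real_affine[of ?g 2 t] by (simp add: mult.assoc[symmetric])
  qed
  also have "(\<integral>\<^sup>+v. ?g v \<partial>lborel) = ennreal ?R"
  proof (cases "\<bar>t\<bar> \<le> 2 * L")
    case True
    have "0 < \<bar>t\<bar> \<or> d \<noteq> 0" using n d by auto
    then show ?thesis using True nn_integral_pbold_time[of "\<bar>t\<bar>" "2 * L" d] by (simp add: power2_abs)
  qed (simp add: indicator_def)
  also have "ennreal (1/2) * ennreal ?R = ennreal (1/2 * ?R)"
    by (rule ennreal_mult'[symmetric]) simp
  also have "\<dots> \<le> ennreal (ln (1/2 + 8 * L\<^sup>2) / (4 * pi) + neglog (\<bar>t\<bar> + d) / (2 * pi))"
  proof (rule ennreal_leI)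
    have "0 \<le> ln (1/2 + 8 * L\<^sup>2)" by (rule ln_cov_const_nonneg[OF L])
    then show "1/2 * ?R \<le> ln (1/2 + 8 * L\<^sup>2) / (4 * pi) + neglog (\<bar>t\<bar> + d) / (2 * pi)"
      using ln_ratio_le_neglog[OF d L n] neglog_nonneg[of "\<bar>t\<bar> + d"] by auto
  qed
  finally show ?thesis .
qed

definition cov_const :: "real \<Rightarrow> real \<Rightarrow> real" where
  "cov_const L C = L * (32 * L / pi + 5 * (2 * C + C\<^sup>2)) + ln (1/2 + 8 * L\<^sup>2) / (4 * pi)"

lemma cov_const_nonneg:
  assumes "1 \<le> L" "0 \<le> C"
  shows "0 \<le> cov_const L C"
proof -
  have "0 \<le> ln (1/2 + 8 * L\<^sup>2)" by (rule ln_cov_const_nonneg[OF assms(1)])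
  then show ?thesis using assms by (simp add: cov_const_def)
qed

lemma sum_qmaj_cov_translates_le:
  assumes u: "\<bar>snd u\<bar> < 1" "0 < tnorm u" and C: "0 \<le> C" and L: "1 \<le> L"
  shows "(\<Sum>m\<in>{-2..2::int}. qmaj_cov L C (u + (0, of_int m)))
    \<le> ennreal (cov_const L C + neglog (tnorm u) / (2 * pi))"
proof -
  obtain t x where tx: "u = (t, x)" by (cases u)
  define c4 where "c4 = 32 * L / pi + 5 * (2 * C + C\<^sup>2)"
  have c4: "0 \<le> c4" using C L by (simp add: c4_def)
  have tn: "tnorm u = \<bar>t\<bar> + dT x" by (simp add: tx tnorm_def)
  have nd: "t \<noteq> 0 \<or> dT x \<noteq> 0" using u(2) by (auto simp: tn)
  have "(\<Sum>m\<in>{-2..2::int}. qmaj_cov L C (u + (0, of_int m)))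
      \<le> (\<integral>\<^sup>+s. indicator (time_overlap L t) s * ennreal (pbold (2 * s + t) (dT x))
          + indicator (time_overlap L t) s * ennreal c4 \<partial>lborel)"
    using sum_qmaj_cov_le[OF _ nd C, of L] u(1) unfolding c4_def
    by (simp add: tx distrib_left)
  also have "\<dots> = (\<integral>\<^sup>+s. indicator (time_overlap L t) s * ennreal (pbold (2 * s + t) (dT x)) \<partial>lborel)
      + ennreal c4 * emeasure lborel (time_overlap L t)"
    by (simp add: nn_integral_add nn_integral_cmult_indicator mult.commute)
  also have "\<dots> \<le> ennreal (ln (1/2 + 8 * L\<^sup>2) / (4 * pi) + neglog (tnorm u) / (2 * pi)) + ennreal c4 * ennreal L"
  proof (intro add_mono mult_left_mono)
    show "(\<integral>\<^sup>+s. indicator (time_overlap L t) s * ennreal (pbold (2 * s + t) (dT x)) \<partial>lborel)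
      \<le> ennreal (ln (1/2 + 8 * L\<^sup>2) / (4 * pi) + neglog (tnorm u) / (2 * pi))"
      unfolding tn using u(2) by (intro nn_integral_time_overlap_pbold_le dT_nonneg dT_le_half L) (simp add: tn)
    have "time_overlap L t \<subseteq> {0..L}" by (auto simp: time_overlap_def)
    then show "emeasure lborel (time_overlap L t) \<le> ennreal L"
      using emeasure_mono[of "time_overlap L t" "{0..L}" lborel] L by simp
  qed simp
  also have "\<dots> = ennreal (ln (1/2 + 8 * L\<^sup>2) / (4 * pi) + neglog (tnorm u) / (2 * pi) + c4 * L)"
    using c4 L ln_cov_const_nonneg[OF L] neglog_nonneg[of "tnorm u"]
    by (simp add: ennreal_mult[symmetric] ennreal_plus[symmetric] del: ennreal_plus)
  also have "\<dots> = ennreal (cov_const L C + neglog (tnorm u) / (2 * pi))"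
    by (simp add: cov_const_def c4_def algebra_simps)
  finally show ?thesis .
qed

section \<open>Mollification on the cylinder\<close>

definition strip :: "(real \<times> real) set" where
  "strip = UNIV \<times> {-1/2..<1/2}"

lemma strip_measurable [measurable]: "strip \<in> sets borel"
  unfolding strip_def by (simp add: borel_prod[symmetric])

lemma tint_eq_strip: "tint f = (\<integral>w. indicator strip w * f w \<partial>lborel)"
  by (simp add: tint_def set_lebesgue_integral_def strip_def)

lemma abs_snd_strip: "a \<in> strip \<Longrightarrow> \<bar>snd a\<bar> \<le> 1/2"
  by (auto simp: strip_def)

lemma translate_in_strip_iff: "y - (0, of_int k) \<in> strip \<longleftrightarrow> k = round (snd y)"
proof -
  have "y - (0, of_int k) \<in> strip \<longleftrightarrow> -1/2 \<le> snd y - of_int k \<and> snd y - of_int k < 1/2"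
    by (cases y) (simp add: strip_def)
  also have "\<dots> \<longleftrightarrow> k = round (snd y)"
    using of_int_round_gt[of "snd y"] of_int_round_le[of "snd y"] round_unique[of "snd y" k]
    by auto
  finally show ?thesis .
qed

lemma nn_integral_strip_translates_le:
  fixes G :: "real \<times> real \<Rightarrow> ennreal"
  assumes [measurable]: "G \<in> borel_measurable borel" and "finite K"
  shows "(\<integral>\<^sup>+w. (\<Sum>k\<in>K. indicator strip w * G (w + (0, of_int k))) \<partial>lborel) \<le> (\<integral>\<^sup>+y. G y \<partial>lborel)"
proof -
  have "(\<integral>\<^sup>+w. (\<Sum>k\<in>K. indicator strip w * G (w + (0, of_int k))) \<partial>lborel)
      = (\<Sum>k\<in>K. \<integral>\<^sup>+w. indicator strip w * G (w + (0, of_int k)) \<partial>lborel)"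
    by (rule nn_integral_sum) auto
  also have "\<dots> = (\<Sum>k\<in>K. \<integral>\<^sup>+y. indicator strip (y - (0, of_int k)) * G y \<partial>lborel)"
  proof (rule sum.cong[OF refl])
    fix k :: int
    show "(\<integral>\<^sup>+w. indicator strip w * G (w + (0, of_int k)) \<partial>lborel)
        = (\<integral>\<^sup>+y. indicator strip (y - (0, of_int k)) * G y \<partial>lborel)"
      using nn_integral_lborel_translate[of "\<lambda>y. indicator strip (y - (0, of_int k)) * G y" "(0, of_int k)"]
      by (simp add: add.commute)
  qed
  also have "\<dots> = (\<integral>\<^sup>+y. (\<Sum>k\<in>K. indicator strip (y - (0, of_int k))) * G y \<partial>lborel)"
    by (subst nn_integral_sum[symmetric]) (auto simp: sum_distrib_right)
  also have "\<dots> \<le> (\<integral>\<^sup>+y. G y \<partial>lborel)"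
  proof (rule nn_integral_mono)
    fix y :: "real \<times> real"
    have "(\<Sum>k\<in>K. indicator strip (y - (0, of_int k)) :: ennreal)
        = (\<Sum>k\<in>K. if k = round (snd y) then 1 else 0)"
      by (intro sum.cong refl) (simp add: indicator_def translate_in_strip_iff)
    also have "\<dots> \<le> 1" using assms(2) by (simp add: sum.delta)
    finally show "(\<Sum>k\<in>K. indicator strip (y - (0, of_int k))) * G y \<le> G y"
      using mult_right_mono[of _ 1 "G y"] by simp
  qed
  finally show ?thesis .
qed

definition snd_round_rem :: "real \<times> real \<Rightarrow> real \<times> real" where
  "snd_round_rem z = (fst z, round_rem (snd z))"

lemma abs_snd_snd_round_rem: "\<bar>snd (snd_round_rem z)\<bar> \<le> 1/2"
  using abs_round_rem_le[of "snd z"] by (simp add: snd_round_rem_def)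

lemma tnorm_snd_round_rem: "tnorm (snd_round_rem z) = tnorm z"
  by (simp add: snd_round_rem_def tnorm_def dT_round_rem)

locale mollifier =
  fixes \<rho> :: "real \<times> real \<Rightarrow> real" and s0 :: real
  assumes nonneg: "\<And>z. 0 \<le> \<rho> z"
    and support: "closure {z. \<rho> z \<noteq> 0} \<subseteq> {-s0..s0} \<times> {-1/4<..<1/4}"
    and cont: "continuous_on UNIV \<rho>"
    and integral_eq_1: "(LINT z | lborel. \<rho> z) = 1"
    and s0_pos: "0 < s0"
begin

definition mol :: "real \<Rightarrow> real \<times> real \<Rightarrow> real" where
  "mol e y = \<rho> ((1 / e) *\<^sub>R y) / e\<^sup>2"

definition mol_per :: "real \<Rightarrow> real \<times> real \<Rightarrow> real" where
  "mol_per e y = mol e (fst y, round_rem (snd y))"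

lemma rho_measurable [measurable]: "\<rho> \<in> borel_measurable borel"
  by (rule borel_measurable_continuous_onI[OF cont])

lemma mol_measurable [measurable]: "mol e \<in> borel_measurable borel"
  unfolding mol_def by measurable

lemma mol_per_measurable [measurable]: "mol_per e \<in> borel_measurable borel"
  unfolding mol_per_def by measurable

lemma mol_nonneg: "0 \<le> mol e y"
  by (simp add: mol_def nonneg)

lemma mol_per_nonneg: "0 \<le> mol_per e y"
  by (simp add: mol_per_def mol_nonneg)

lemma nonzero_imp_in_support:
  assumes "\<rho> z \<noteq> 0"
  shows "\<bar>fst z\<bar> \<le> s0 \<and> \<bar>snd z\<bar> < 1/4"
proof -
  have "z \<in> {-s0..s0} \<times> {-1/4<..<1/4}"
    using assms support closure_subset[of "{z. \<rho> z \<noteq> 0}"] by blast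
  then show ?thesis by (cases z) (auto simp: abs_le_iff abs_less_iff)
qed

lemma mol_support:
  assumes "0 < e" "mol e y \<noteq> 0"
  shows "\<bar>fst y\<bar> \<le> s0 * e" "\<bar>snd y\<bar> < e / 4"
proof -
  have "\<rho> ((1 / e) *\<^sub>R y) \<noteq> 0" using assms by (auto simp: mol_def)
  from nonzero_imp_in_support[OF this] assms(1) show "\<bar>fst y\<bar> \<le> s0 * e" "\<bar>snd y\<bar> < e / 4"
    by (cases y; simp add: field_simps abs_divide)+
qed

lemma rho_eps_eq_mol_per:
  assumes e: "0 < e" "e < 1"
  shows "rho_eps \<rho> e y = mol_per e y"
proof -
  obtain t x where y: "y = (t, x)" by (cases y)
  have "e powi (-2) * \<rho> ((1/e) *\<^sub>R (t, x + of_int k)) = 0" if "k \<noteq> - round x" for k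
  proof -
    have "\<not> \<bar>snd (t, x + of_int k)\<bar> < e / 4"
      using abs_add_of_int_ge_half[OF that] e by auto
    then have "mol e (t, x + of_int k) = 0" using mol_support(2)[OF e(1)] by blast
    then show ?thesis using e by (simp add: mol_def)
  qed
  then have "rho_eps \<rho> e y = (\<Sum>\<^sub>\<infinity>k\<in>{- round x}. e powi (-2) * \<rho> ((1/e) *\<^sub>R (t, x + of_int k)))"
    unfolding rho_eps_def y fst_conv snd_conv by (intro infsum_cong_neutral) auto
  also have "\<dots> = mol_per e y"
    using e by (simp add: mol_per_def mol_def round_rem_def y power_int_minus divide_inverse mult.commute)
  finally show ?thesis .
qed

lemma mol_per_translate: "mol_per e (p + (0, of_int n)) = mol_per e p"
  by (cases p) (simp add: mol_per_def)

lemma mol_per_eq_mol: "mol_per e p = mol e (p + (0, - of_int (round (snd p))))"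
  by (cases p) (simp add: mol_per_def round_rem_def)

lemma bounded_above: "\<exists>M. 0 \<le> M \<and> (\<forall>z. \<rho> z \<le> M)"
proof -
  have "compact ({-s0..s0} \<times> {-1/4..1/4::real})" by (intro compact_Times compact_Icc)
  then have "compact (\<rho> ` ({-s0..s0} \<times> {-1/4..1/4}))"
    using continuous_on_subset[OF cont] compact_continuous_image by blast
  then obtain M where M: "\<forall>x\<in>\<rho> ` ({-s0..s0} \<times> {-1/4..1/4}). norm x \<le> M"
    using compact_imp_bounded bounded_iff by metis
  have "\<rho> z \<le> max 0 M" for z
  proof (cases "\<rho> z = 0")
    case False
    then have "z \<in> {-s0..s0} \<times> {-1/4..1/4}"
      using nonzero_imp_in_support by (cases z) force
    then show ?thesis using M by force
  qed simp
  then show ?thesis by (intro exI[of _ "max 0 M"]) auto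
qed

lemma nn_integral_eq_1: "(\<integral>\<^sup>+z. ennreal (\<rho> z) \<partial>lborel) = 1"
proof -
  have "integrable lborel \<rho>"
    using integral_eq_1 not_integrable_integral_eq by force
  then show ?thesis using nn_integral_eq_integral[of lborel \<rho>] nonneg integral_eq_1 by simp
qed

lemma nn_integral_mol:
  assumes e: "0 < e"
  shows "(\<integral>\<^sup>+y. ennreal (mol e y) \<partial>lborel) = 1"
proof -
  have "(\<integral>\<^sup>+y. ennreal (mol e y) \<partial>lborel)
     = (\<integral>\<^sup>+y. ennreal (mol e y) \<partial>density (distr lborel borel (\<lambda>x. 0 + e *\<^sub>R x)) (\<lambda>_. \<bar>e\<bar> ^ DIM(real \<times> real)))"
    using e by (subst lborel_affine[of e 0, symmetric]) auto
  also have "\<dots> = (\<integral>\<^sup>+x. ennreal (\<bar>e\<bar> ^ DIM(real \<times> real)) * ennreal (mol e (e *\<^sub>R x)) \<partial>lborel)"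
    by (simp add: nn_integral_density nn_integral_distr)
  also have "\<dots> = (\<integral>\<^sup>+x. ennreal (\<rho> x) \<partial>lborel)"
  proof (intro nn_integral_cong)
    fix x :: "real \<times> real"
    have "\<bar>e\<bar> ^ DIM(real \<times> real) * mol e (e *\<^sub>R x) = \<rho> x"
      using e by (simp add: mol_def power2_eq_square)
    then show "ennreal (\<bar>e\<bar> ^ DIM(real \<times> real)) * ennreal (mol e (e *\<^sub>R x)) = ennreal (\<rho> x)"
      by (simp add: ennreal_mult[symmetric] mol_nonneg)
  qed
  finally show ?thesis by (simp add: nn_integral_eq_1)
qed


definition qmaj_mol :: "real \<Rightarrow> real \<Rightarrow> real \<Rightarrow> real \<times> real \<Rightarrow> ennreal" where
  "qmaj_mol L C e w = (\<integral>\<^sup>+a. indicator strip a * ennreal (qmaj L C a) * ennreal (mol_per e (w - a)) \<partial>lborel)"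

text \<open>After unfolding the periodic convolutions only the vertical translates by \<open>|m| \<le> 2\<close>
  can meet one period.\<close>

definition smoothed_cov :: "real \<Rightarrow> real \<Rightarrow> real \<Rightarrow> real \<times> real \<Rightarrow> ennreal" where
  "smoothed_cov L C e c = (\<integral>\<^sup>+y. \<integral>\<^sup>+y'. ennreal (mol e y) * ennreal (mol e y')
     * (\<Sum>m\<in>{-2..2::int}. qmaj_cov L C (c + y - y' + (0, of_int m))) \<partial>lborel \<partial>lborel)"

lemma cov_le_qmaj_mol:
  assumes e: "0 < e" "e < 1" and f_nonneg: "\<And>a. 0 \<le> f a"
    and f_le: "\<And>a. a \<in> strip \<Longrightarrow> f a \<le> qmaj L C a" and C: "0 \<le> C"
  shows "ennreal (let v = tconv f (rho_eps \<rho> e) in tint (\<lambda>w. v w * v (z + w)))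
     \<le> (\<integral>\<^sup>+w. indicator strip w * qmaj_mol L C e w * qmaj_mol L C e (z + w) \<partial>lborel)"
proof -
  define v where "v = tconv f (rho_eps \<rho> e)"
  have v_eq: "v w = (\<integral>a. indicator strip a * (f a * mol_per e (w - a)) \<partial>lborel)" for w
    by (simp add: v_def tconv_def tint_eq_strip rho_eps_eq_mol_per[OF e])
  have v_nonneg: "0 \<le> v w" for w
    unfolding v_eq by (intro integral_nonneg_AE AE_I2) (simp add: f_nonneg mol_per_nonneg)
  have v_le: "ennreal (v w) \<le> qmaj_mol L C e w" for w
    unfolding v_eq qmaj_mol_def
  proof (rule ennreal_integral_le_nn_integral)
    fix a
    show "0 \<le> indicator strip a * (f a * mol_per e (w - a))"
      by (simp add: f_nonneg mol_per_nonneg)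
    show "ennreal (indicator strip a * (f a * mol_per e (w - a)))
        \<le> indicator strip a * ennreal (qmaj L C a) * ennreal (mol_per e (w - a))"
    proof (cases "a \<in> strip")
      case True
      have "f a * mol_per e (w - a) \<le> qmaj L C a * mol_per e (w - a)"
        using f_le[OF True] by (simp add: mult_right_mono mol_per_nonneg)
      then show ?thesis
        using True by (simp add: ennreal_mult[symmetric] qmaj_nonneg C mol_per_nonneg)
    qed simp
  qed
  have "ennreal (tint (\<lambda>w. v w * v (z + w)))
      \<le> (\<integral>\<^sup>+w. indicator strip w * qmaj_mol L C e w * qmaj_mol L C e (z + w) \<partial>lborel)"
    unfolding tint_eq_strip
  proof (rule ennreal_integral_le_nn_integral)
    fix w
    show "0 \<le> indicator strip w * (v w * v (z + w))" by (simp add: v_nonneg)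
    have "ennreal (indicator strip w * (v w * v (z + w)))
        = indicator strip w * (ennreal (v w) * ennreal (v (z + w)))"
      by (simp add: ennreal_mult v_nonneg indicator_def)
    also have "\<dots> \<le> indicator strip w * (qmaj_mol L C e w * qmaj_mol L C e (z + w))"
      by (intro mult_left_mono mult_mono v_le) auto
    finally show "ennreal (indicator strip w * (v w * v (z + w)))
        \<le> indicator strip w * qmaj_mol L C e w * qmaj_mol L C e (z + w)"
      by (simp add: mult.assoc)
  qed
  then show ?thesis by (simp add: v_def Let_def)
qed

lemma qmaj_mol_snd_round_rem: "qmaj_mol L C e (z + w) = qmaj_mol L C e (snd_round_rem z + w)"
proof -
  have "mol_per e (z + w - a) = mol_per e (snd_round_rem z + w - a)" for a
  proof -
    have "z + w - a = (snd_round_rem z + w - a) + (0, of_int (round (snd z)))"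
      by (cases z) (simp add: snd_round_rem_def round_rem_def)
    then show ?thesis by (simp only: mol_per_translate)
  qed
  then show ?thesis by (simp add: qmaj_mol_def)
qed

lemma nn_integral_qmaj_mol_product:
  "(\<integral>\<^sup>+w. indicator strip w * qmaj_mol L C e w * qmaj_mol L C e (c + w) \<partial>lborel)
    = (\<integral>\<^sup>+a. \<integral>\<^sup>+b. (indicator strip a * ennreal (qmaj L C a)) * (indicator strip b * ennreal (qmaj L C b))
         * (\<integral>\<^sup>+w. indicator strip w * ennreal (mol_per e (w - a)) * ennreal (mol_per e (c + w - b)) \<partial>lborel)
       \<partial>lborel \<partial>lborel)"
proof -
  define F where "F w a = indicator strip a * ennreal (qmaj L C a) * ennreal (mol_per e (w - a))" for w a
  define G where "G w b = indicator strip b * ennreal (qmaj L C b) * ennreal (mol_per e (c + w - b))" for w b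
  have [measurable]: "case_prod F \<in> borel_measurable (lborel \<Otimes>\<^sub>M lborel)"
    "case_prod G \<in> borel_measurable (lborel \<Otimes>\<^sub>M lborel)"
    "F w \<in> borel_measurable borel" "G w \<in> borel_measurable borel" for w
    unfolding F_def G_def by measurable
  have "indicator strip w * qmaj_mol L C e w * qmaj_mol L C e (c + w)
      = (\<integral>\<^sup>+a. \<integral>\<^sup>+b. indicator strip w * F w a * G w b \<partial>lborel \<partial>lborel)" for w
  proof -
    have "indicator strip w * qmaj_mol L C e w * qmaj_mol L C e (c + w)
        = indicator strip w * (\<integral>\<^sup>+a. F w a \<partial>lborel) * (\<integral>\<^sup>+b. G w b \<partial>lborel)"
      by (simp add: qmaj_mol_def F_def G_def add.assoc)
    also have "\<dots> = (\<integral>\<^sup>+a. indicator strip w * F w a * (\<integral>\<^sup>+b. G w b \<partial>lborel) \<partial>lborel)"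
      by (subst nn_integral_cmult[symmetric], measurable, subst nn_integral_multc[symmetric], measurable)
    also have "\<dots> = (\<integral>\<^sup>+a. \<integral>\<^sup>+b. indicator strip w * F w a * G w b \<partial>lborel \<partial>lborel)"
      by (intro nn_integral_cong, subst nn_integral_cmult[symmetric]) auto
    finally show ?thesis .
  qed
  then have "(\<integral>\<^sup>+w. indicator strip w * qmaj_mol L C e w * qmaj_mol L C e (c + w) \<partial>lborel)
      = (\<integral>\<^sup>+w. \<integral>\<^sup>+a. \<integral>\<^sup>+b. indicator strip w * F w a * G w b \<partial>lborel \<partial>lborel \<partial>lborel)"
    by simp
  also have "\<dots> = (\<integral>\<^sup>+a. \<integral>\<^sup>+w. \<integral>\<^sup>+b. indicator strip w * F w a * G w b \<partial>lborel \<partial>lborel \<partial>lborel)"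
    by (rule lborel_pair.Fubini') (unfold F_def G_def, measurable)
  also have "\<dots> = (\<integral>\<^sup>+a. \<integral>\<^sup>+b. \<integral>\<^sup>+w. indicator strip w * F w a * G w b \<partial>lborel \<partial>lborel \<partial>lborel)"
    by (intro nn_integral_cong lborel_pair.Fubini') (unfold F_def G_def, measurable)
  also have "\<dots> = (\<integral>\<^sup>+a. \<integral>\<^sup>+b. (indicator strip a * ennreal (qmaj L C a)) * (indicator strip b * ennreal (qmaj L C b))
         * (\<integral>\<^sup>+w. indicator strip w * ennreal (mol_per e (w - a)) * ennreal (mol_per e (c + w - b)) \<partial>lborel)
       \<partial>lborel \<partial>lborel)"
    by (intro nn_integral_cong, subst nn_integral_cmult[symmetric])
       (auto intro!: nn_integral_cong simp: F_def G_def ac_simps)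
  finally show ?thesis .
qed

lemma nn_integral_strip_mol_per_product_le:
  assumes a: "a \<in> strip"
  shows "(\<integral>\<^sup>+w. indicator strip w * ennreal (mol_per e (w - a)) * ennreal (mol_per e (c + w - b)) \<partial>lborel)
     \<le> (\<integral>\<^sup>+y. ennreal (mol e y) * ennreal (mol_per e (c + a - b + y)) \<partial>lborel)"
proof -
  define G where "G y = ennreal (mol e (y - a)) * ennreal (mol_per e (c + y - b))" for y
  have [measurable]: "G \<in> borel_measurable borel" unfolding G_def by measurable
  have "indicator strip w * ennreal (mol_per e (w - a)) * ennreal (mol_per e (c + w - b))
      \<le> (\<Sum>k\<in>{-1..1::int}. indicator strip w * G (w + (0, of_int k)))" for w
  proof (cases "w \<in> strip")
    case True
    define k0 where "k0 = - round (snd (w - a))"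
    have "\<bar>snd (w - a)\<bar> < 1"
      using True a by (auto simp: strip_def)
    then have k0: "k0 \<in> {-1..1}"
      using round_in_range[of "snd (w - a)" 1] by (auto simp: k0_def)
    have "mol_per e (w - a) = mol e (w + (0, of_int k0) - a)"
      by (subst mol_per_eq_mol) (simp add: k0_def algebra_simps)
    moreover have "mol_per e (c + w - b) = mol_per e (c + (w + (0, of_int k0)) - b)"
      using mol_per_translate[of e "c + w - b" k0] by (simp add: algebra_simps)
    ultimately have "indicator strip w * ennreal (mol_per e (w - a)) * ennreal (mol_per e (c + w - b))
        = indicator strip w * G (w + (0, of_int k0))"
      by (simp add: G_def mult.assoc)
    also have "\<dots> \<le> (\<Sum>k\<in>{-1..1::int}. indicator strip w * G (w + (0, of_int k)))"
      by (rule member_le_sum[OF k0]) auto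
    finally show ?thesis .
  qed simp
  then have "(\<integral>\<^sup>+w. indicator strip w * ennreal (mol_per e (w - a)) * ennreal (mol_per e (c + w - b)) \<partial>lborel)
      \<le> (\<integral>\<^sup>+w. (\<Sum>k\<in>{-1..1::int}. indicator strip w * G (w + (0, of_int k))) \<partial>lborel)"
    by (intro nn_integral_mono)
  also have "\<dots> \<le> (\<integral>\<^sup>+y. G y \<partial>lborel)"
    by (rule nn_integral_strip_translates_le) auto
  also have "\<dots> = (\<integral>\<^sup>+y. G (a + y) \<partial>lborel)"
    by (rule nn_integral_lborel_translate[symmetric]) measurable
  also have "\<dots> = (\<integral>\<^sup>+y. ennreal (mol e y) * ennreal (mol_per e (c + a - b + y)) \<partial>lborel)"
    by (simp add: G_def algebra_simps)
  finally show ?thesis .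
qed

lemma nn_integral_strip_qmaj_mol_per_le:
  assumes e: "0 < e" "e < 1" and y: "mol e y \<noteq> 0" and c: "\<bar>snd c\<bar> \<le> 1/2" and a: "a \<in> strip"
  shows "(\<integral>\<^sup>+b. indicator strip b * ennreal (qmaj L C b) * ennreal (mol_per e (c + a - b + y)) \<partial>lborel)
    \<le> (\<Sum>m\<in>{-2..2::int}. \<integral>\<^sup>+y'. ennreal (qmaj L C (c + a + y + (0, of_int m) - y')) * ennreal (mol e y') \<partial>lborel)"
proof -
  define p where "p = c + a + y"
  have "\<bar>snd y\<bar> < 1/4" using mol_support(2)[OF e(1) y] e by simp
  have "indicator strip b * ennreal (qmaj L C b) * ennreal (mol_per e (c + a - b + y))
      \<le> (\<Sum>m\<in>{-2..2::int}. ennreal (qmaj L C b) * ennreal (mol e (p + (0, of_int m) - b)))" for b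
  proof (cases "b \<in> strip")
    case True
    define k0 where "k0 = - round (snd (p - b))"
    have "\<bar>snd a\<bar> \<le> 1/2" "\<bar>snd b\<bar> \<le> 1/2"
      using abs_snd_strip[OF a] abs_snd_strip[OF True] by simp_all
    then have "\<bar>snd (p - b)\<bar> < 5/2"
      using c \<open>\<bar>snd y\<bar> < 1/4\<close> unfolding p_def by (simp only: snd_add snd_diff)
    then have k0: "k0 \<in> {-2..2}"
      using round_in_range[of "snd (p - b)" 2] by (auto simp: k0_def)
    have "mol_per e (c + a - b + y) = mol e (p + (0, of_int k0) - b)"
      by (subst mol_per_eq_mol) (simp add: k0_def p_def algebra_simps)
    then have "indicator strip b * ennreal (qmaj L C b) * ennreal (mol_per e (c + a - b + y))
        = ennreal (qmaj L C b) * ennreal (mol e (p + (0, of_int k0) - b))"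
      using True by simp
    also have "\<dots> \<le> (\<Sum>m\<in>{-2..2::int}. ennreal (qmaj L C b) * ennreal (mol e (p + (0, of_int m) - b)))"
      by (rule member_le_sum[OF k0]) auto
    finally show ?thesis .
  qed simp
  then have "(\<integral>\<^sup>+b. indicator strip b * ennreal (qmaj L C b) * ennreal (mol_per e (c + a - b + y)) \<partial>lborel)
      \<le> (\<integral>\<^sup>+b. (\<Sum>m\<in>{-2..2::int}. ennreal (qmaj L C b) * ennreal (mol e (p + (0, of_int m) - b))) \<partial>lborel)"
    by (intro nn_integral_mono)
  also have "\<dots> = (\<Sum>m\<in>{-2..2::int}. \<integral>\<^sup>+b. ennreal (qmaj L C b) * ennreal (mol e (p + (0, of_int m) - b)) \<partial>lborel)"
    by (rule nn_integral_sum) auto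
  also have "\<dots> = (\<Sum>m\<in>{-2..2::int}. \<integral>\<^sup>+y'. ennreal (qmaj L C (p + (0, of_int m) - y')) * ennreal (mol e y') \<partial>lborel)"
  proof (rule sum.cong[OF refl])
    fix m :: int
    define d where "d = p + (0, of_int m)"
    have "(\<integral>\<^sup>+y'. (\<lambda>b. ennreal (qmaj L C b) * ennreal (mol e (d - b))) (d - y') \<partial>lborel)
        = (\<integral>\<^sup>+b. ennreal (qmaj L C b) * ennreal (mol e (d - b)) \<partial>lborel)"
      by (rule nn_integral_lborel_reflect) measurable
    then show "(\<integral>\<^sup>+b. ennreal (qmaj L C b) * ennreal (mol e (p + (0, of_int m) - b)) \<partial>lborel)
        = (\<integral>\<^sup>+y'. ennreal (qmaj L C (p + (0, of_int m) - y')) * ennreal (mol e y') \<partial>lborel)"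
      by (simp add: d_def)
  qed
  finally show ?thesis by (simp add: p_def)
qed


lemma nn_integral_strip_qmaj_product_le:
  assumes e: "0 < e" "e < 1" and c: "\<bar>snd c\<bar> \<le> 1/2"
  shows "(\<integral>\<^sup>+b. (indicator strip a * ennreal (qmaj L C a)) * (indicator strip b * ennreal (qmaj L C b))
        * (ennreal (mol e y) * ennreal (mol_per e (c + a - b + y))) \<partial>lborel)
    \<le> (\<Sum>m\<in>{-2..2::int}. \<integral>\<^sup>+y'. ennreal (qmaj L C a) * ennreal (mol e y) *
          (ennreal (qmaj L C (a + (c + y - y' + (0, of_int m)))) * ennreal (mol e y')) \<partial>lborel)"
proof -
  define qs where "qs a = indicator strip a * ennreal (qmaj L C a)" for a
  have [measurable]: "qs \<in> borel_measurable borel" unfolding qs_def by measurable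
  have "(\<integral>\<^sup>+b. qs a * qs b * (ennreal (mol e y) * ennreal (mol_per e (c + a - b + y))) \<partial>lborel)
    \<le> (\<Sum>m\<in>{-2..2::int}. \<integral>\<^sup>+y'. ennreal (qmaj L C a) * ennreal (mol e y) *
          (ennreal (qmaj L C (a + (c + y - y' + (0, of_int m)))) * ennreal (mol e y')) \<partial>lborel)"
  proof (cases "a \<in> strip \<and> mol e y \<noteq> 0")
    case True
    have "(\<integral>\<^sup>+b. qs a * qs b * (ennreal (mol e y) * ennreal (mol_per e (c + a - b + y))) \<partial>lborel)
        = (qs a * ennreal (mol e y))
          * (\<integral>\<^sup>+b. indicator strip b * ennreal (qmaj L C b) * ennreal (mol_per e (c + a - b + y)) \<partial>lborel)"
      by (subst nn_integral_cmult[symmetric]) (auto simp: qs_def ac_simps intro!: nn_integral_cong)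
    also have "\<dots> \<le> (ennreal (qmaj L C a) * ennreal (mol e y)) *
        (\<Sum>m\<in>{-2..2::int}. \<integral>\<^sup>+y'. ennreal (qmaj L C (c + a + y + (0, of_int m) - y')) * ennreal (mol e y') \<partial>lborel)"
      using True by (intro mult_mono nn_integral_strip_qmaj_mol_per_le[OF e _ c]) (auto simp: qs_def)
    also have "\<dots> = (\<Sum>m\<in>{-2..2::int}. \<integral>\<^sup>+y'. ennreal (qmaj L C a) * ennreal (mol e y) *
        (ennreal (qmaj L C (a + (c + y - y' + (0, of_int m)))) * ennreal (mol e y')) \<partial>lborel)"
      by (subst sum_distrib_left, intro sum.cong refl, subst nn_integral_cmult[symmetric])
         (auto simp: algebra_simps)
    finally show ?thesis .
  next
    case False
    then have "qs a * qs b * (ennreal (mol e y) * ennreal (mol_per e (c + a - b + y))) = 0" for b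
      by (auto simp: qs_def)
    then have "(\<integral>\<^sup>+b. qs a * qs b * (ennreal (mol e y) * ennreal (mol_per e (c + a - b + y))) \<partial>lborel)
        = (\<integral>\<^sup>+b. 0 \<partial>(lborel :: (real \<times> real) measure))"
      by (intro nn_integral_cong) blast
    then show ?thesis by simp
  qed
  then show ?thesis by (simp only: qs_def)
qed

lemma strip_product_integral_le:
  assumes e: "0 < e" "e < 1" and c: "\<bar>snd c\<bar> \<le> 1/2" and C: "0 \<le> C"
  shows "(\<integral>\<^sup>+a. \<integral>\<^sup>+b. (indicator strip a * ennreal (qmaj L C a)) * (indicator strip b * ennreal (qmaj L C b))
         * (\<integral>\<^sup>+w. indicator strip w * ennreal (mol_per e (w - a)) * ennreal (mol_per e (c + w - b)) \<partial>lborel)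
       \<partial>lborel \<partial>lborel)
    \<le> (\<integral>\<^sup>+a. \<integral>\<^sup>+y. (\<Sum>m\<in>{-2..2::int}. \<integral>\<^sup>+y'. ennreal (qmaj L C a) * ennreal (mol e y) *
          (ennreal (qmaj L C (a + (c + y - y' + (0, of_int m)))) * ennreal (mol e y')) \<partial>lborel) \<partial>lborel \<partial>lborel)"
proof -
  define qs where "qs a = indicator strip a * ennreal (qmaj L C a)" for a
  have [measurable]: "qs \<in> borel_measurable borel" unfolding qs_def by measurable
  have "(\<integral>\<^sup>+a. \<integral>\<^sup>+b. qs a * qs b
         * (\<integral>\<^sup>+w. indicator strip w * ennreal (mol_per e (w - a)) * ennreal (mol_per e (c + w - b)) \<partial>lborel)
       \<partial>lborel \<partial>lborel)
      \<le> (\<integral>\<^sup>+a. \<integral>\<^sup>+b. \<integral>\<^sup>+y. qs a * qs b * (ennreal (mol e y) * ennreal (mol_per e (c + a - b + y)))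
       \<partial>lborel \<partial>lborel \<partial>lborel)"
  proof (intro nn_integral_mono)
    fix a b
    show "qs a * qs b * (\<integral>\<^sup>+w. indicator strip w * ennreal (mol_per e (w - a)) * ennreal (mol_per e (c + w - b)) \<partial>lborel)
        \<le> (\<integral>\<^sup>+y. qs a * qs b * (ennreal (mol e y) * ennreal (mol_per e (c + a - b + y))) \<partial>lborel)"
    proof (cases "a \<in> strip")
      case True
      then show ?thesis
        by (subst nn_integral_cmult) (auto intro!: mult_left_mono nn_integral_strip_mol_per_product_le)
    qed (simp add: qs_def)
  qed
  also have "\<dots> = (\<integral>\<^sup>+a. \<integral>\<^sup>+y. \<integral>\<^sup>+b. qs a * qs b * (ennreal (mol e y) * ennreal (mol_per e (c + a - b + y)))
       \<partial>lborel \<partial>lborel \<partial>lborel)"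
    by (intro nn_integral_cong lborel_pair.Fubini') measurable
  also have "\<dots> \<le> (\<integral>\<^sup>+a. \<integral>\<^sup>+y. (\<Sum>m\<in>{-2..2::int}. \<integral>\<^sup>+y'. ennreal (qmaj L C a) * ennreal (mol e y) *
          (ennreal (qmaj L C (a + (c + y - y' + (0, of_int m)))) * ennreal (mol e y')) \<partial>lborel) \<partial>lborel \<partial>lborel)"
    unfolding qs_def by (intro nn_integral_mono nn_integral_strip_qmaj_product_le[OF e c])
  finally show ?thesis by (simp add: qs_def)
qed

lemma sum_integral_qmaj_product_eq_smoothed_cov:
  "(\<integral>\<^sup>+a. \<integral>\<^sup>+y. (\<Sum>m\<in>{-2..2::int}. \<integral>\<^sup>+y'. ennreal (qmaj L C a) * ennreal (mol e y) *
       (ennreal (qmaj L C (a + (c + y - y' + (0, of_int m)))) * ennreal (mol e y')) \<partial>lborel) \<partial>lborel \<partial>lborel)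
    = smoothed_cov L C e c"
proof -
  let ?f = "\<lambda>a y y'. (\<Sum>m\<in>{-2..2::int}. ennreal (qmaj L C a) * ennreal (mol e y) *
       (ennreal (qmaj L C (a + (c + y - y' + (0, of_int m)))) * ennreal (mol e y')))"
  have "(\<integral>\<^sup>+a. \<integral>\<^sup>+y. (\<Sum>m\<in>{-2..2::int}. \<integral>\<^sup>+y'. ennreal (qmaj L C a) * ennreal (mol e y) *
       (ennreal (qmaj L C (a + (c + y - y' + (0, of_int m)))) * ennreal (mol e y')) \<partial>lborel) \<partial>lborel \<partial>lborel)
      = (\<integral>\<^sup>+a. \<integral>\<^sup>+y. \<integral>\<^sup>+y'. ?f a y y' \<partial>lborel \<partial>lborel \<partial>lborel)"
    by (intro nn_integral_cong nn_integral_sum[symmetric]) auto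
  also have "\<dots> = (\<integral>\<^sup>+y. \<integral>\<^sup>+a. \<integral>\<^sup>+y'. ?f a y y' \<partial>lborel \<partial>lborel \<partial>lborel)"
    by (rule lborel_pair.Fubini'[symmetric]) measurable
  also have "\<dots> = (\<integral>\<^sup>+y. \<integral>\<^sup>+y'. \<integral>\<^sup>+a. ?f a y y' \<partial>lborel \<partial>lborel \<partial>lborel)"
    by (intro nn_integral_cong lborel_pair.Fubini'[symmetric]) measurable
  also have "\<dots> = smoothed_cov L C e c"
    unfolding smoothed_cov_def
  proof (intro nn_integral_cong)
    fix y y' :: "real \<times> real"
    have "(\<integral>\<^sup>+a. ?f a y y' \<partial>lborel)
        = (\<Sum>m\<in>{-2..2::int}. \<integral>\<^sup>+a. (ennreal (mol e y) * ennreal (mol e y')) *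
          (ennreal (qmaj L C a) * ennreal (qmaj L C (a + (c + y - y' + (0, of_int m))))) \<partial>lborel)"
      by (subst nn_integral_sum) (auto simp: ac_simps)
    also have "\<dots> = ennreal (mol e y) * ennreal (mol e y')
        * (\<Sum>m\<in>{-2..2::int}. qmaj_cov L C (c + y - y' + (0, of_int m)))"
      by (subst sum_distrib_left, intro sum.cong refl, subst nn_integral_cmult) (auto simp: qmaj_cov_def)
    finally show "(\<integral>\<^sup>+a. ?f a y y' \<partial>lborel) = ennreal (mol e y) * ennreal (mol e y')
        * (\<Sum>m\<in>{-2..2::int}. qmaj_cov L C (c + y - y' + (0, of_int m)))" .
  qed
  finally show ?thesis .
qed

lemma cov_le_smoothed_cov:
  assumes e: "0 < e" "e < 1" and f_nonneg: "\<And>a. 0 \<le> f a"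
    and f_le: "\<And>a. a \<in> strip \<Longrightarrow> f a \<le> qmaj L C a" and C: "0 \<le> C"
  shows "ennreal (let v = tconv f (rho_eps \<rho> e) in tint (\<lambda>w. v w * v (z + w)))
     \<le> smoothed_cov L C e (snd_round_rem z)"
proof -
  let ?c = "snd_round_rem z"
  have "ennreal (let v = tconv f (rho_eps \<rho> e) in tint (\<lambda>w. v w * v (z + w)))
     \<le> (\<integral>\<^sup>+w. indicator strip w * qmaj_mol L C e w * qmaj_mol L C e (z + w) \<partial>lborel)"
    by (rule cov_le_qmaj_mol[OF e f_nonneg f_le C])
  also have "\<dots> = (\<integral>\<^sup>+w. indicator strip w * qmaj_mol L C e w * qmaj_mol L C e (?c + w) \<partial>lborel)"
    by (simp only: qmaj_mol_snd_round_rem[of L C e z])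
  also have "\<dots> \<le> smoothed_cov L C e ?c"
    unfolding nn_integral_qmaj_mol_product sum_integral_qmaj_product_eq_smoothed_cov[symmetric]
    by (rule strip_product_integral_le[OF e abs_snd_snd_round_rem C])
  finally show ?thesis .
qed


lemma mol_le: "0 < e \<Longrightarrow> (\<And>z. \<rho> z \<le> M) \<Longrightarrow> mol e y \<le> M / e\<^sup>2"
  by (simp add: mol_def divide_right_mono)

lemma tnorm_le_if_mol_nonzero:
  assumes "0 < e" "mol e y \<noteq> 0"
  shows "tnorm y \<le> (s0 + 1/4) * e"
  using mol_support[OF assms] dT_le_abs[of "snd y"] by (simp add: tnorm_def algebra_simps)

lemma abs_snd_add_diff_less_1:
  assumes e: "0 < e" "e < 1" and c: "\<bar>snd c\<bar> \<le> 1/2" and "mol e y \<noteq> 0" "mol e y' \<noteq> 0"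
  shows "\<bar>snd (c + y - y')\<bar> < 1"
proof -
  have "\<bar>snd y\<bar> < e / 4" "\<bar>snd y'\<bar> < e / 4" using mol_support(2)[OF e(1)] assms by auto
  then show ?thesis using c e by (simp add: abs_if split: if_split_asm)
qed

lemma smoothed_cov_le_far:
  assumes e: "0 < e" "e < 1" and c: "\<bar>snd c\<bar> \<le> 1/2" and C: "0 \<le> C" and L: "1 \<le> L"
    and far: "4 * (s0 + 1/4) * e \<le> tnorm c"
  shows "smoothed_cov L C e c \<le> ennreal (cov_const L C + neglog (tnorm c - 2 * (s0 + 1/4) * e) / (2 * pi))"
proof -
  define \<beta> where "\<beta> = tnorm c - 2 * (s0 + 1/4) * e"
  define K where "K = cov_const L C + neglog \<beta> / (2 * pi)"
  have "2 * (s0 + 1/4) * e < 4 * (s0 + 1/4) * e" using e s0_pos by simp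
  then have \<beta>: "0 < \<beta>" using far by (simp add: \<beta>_def)
  have bound: "(\<Sum>m\<in>{-2..2::int}. qmaj_cov L C (c + y - y' + (0, of_int m))) \<le> ennreal K"
    if "mol e y \<noteq> 0" "mol e y' \<noteq> 0" for y y'
  proof -
    have "tnorm c \<le> tnorm (c + y - y') + tnorm (- y) + tnorm y'"
      using tnorm_triangle[of "c + y - y' + - y" y'] tnorm_triangle[of "c + y - y'" "- y"] by simp
    then have "\<beta> \<le> tnorm (c + y - y')"
      using tnorm_le_if_mol_nonzero[OF e(1) that(1)] tnorm_le_if_mol_nonzero[OF e(1) that(2)]
      unfolding \<beta>_def tnorm_uminus by linarith
    then have "neglog (tnorm (c + y - y')) \<le> neglog \<beta>"
      using \<beta> by (intro neglog_antimono) auto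
    moreover have "(\<Sum>m\<in>{-2..2::int}. qmaj_cov L C (c + y - y' + (0, of_int m)))
        \<le> ennreal (cov_const L C + neglog (tnorm (c + y - y')) / (2 * pi))"
      using \<beta> \<open>\<beta> \<le> tnorm (c + y - y')\<close>
      by (intro sum_qmaj_cov_translates_le abs_snd_add_diff_less_1[OF e c that] C L) auto
    ultimately show ?thesis
      unfolding K_def by (elim order_trans) (auto intro!: ennreal_leI divide_right_mono)
  qed
  have "smoothed_cov L C e c
      \<le> (\<integral>\<^sup>+y. \<integral>\<^sup>+y'. ennreal (mol e y) * (ennreal (mol e y') * ennreal K) \<partial>lborel \<partial>lborel)"
    unfolding smoothed_cov_def
  proof (intro nn_integral_mono)
    fix y y'
    show "ennreal (mol e y) * ennreal (mol e y') * (\<Sum>m\<in>{-2..2::int}. qmaj_cov L C (c + y - y' + (0, of_int m)))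
        \<le> ennreal (mol e y) * (ennreal (mol e y') * ennreal K)"
    proof (cases "mol e y = 0 \<or> mol e y' = 0")
      case False
      then show ?thesis using bound[of y y'] by (simp add: mult.assoc mult_left_mono)
    qed auto
  qed
  also have "\<dots> = ennreal K"
    using nn_integral_mol[OF e(1)] by (simp add: nn_integral_cmult nn_integral_multc)
  finally show ?thesis by (simp add: K_def \<beta>_def)
qed

lemma nn_integral_mol_neglog_le:
  assumes e: "0 < e" and M: "0 \<le> M" "\<And>z. \<rho> z \<le> M"
  shows "(\<integral>\<^sup>+y'. ennreal (mol e y') * ennreal (neglog ((k - fst y') / e)) \<partial>lborel) \<le> ennreal M"
proof -
  let ?I = "\<lambda>x::real. indicator {-(e/4)..e/4} x :: ennreal"
  have "(\<integral>\<^sup>+y'. ennreal (mol e y') * ennreal (neglog ((k - fst y') / e)) \<partial>lborel)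
      \<le> (\<integral>\<^sup>+y'. ennreal (M / e\<^sup>2) * ?I (snd y') * ennreal (neglog ((k - fst y') / e)) \<partial>lborel)"
  proof (intro nn_integral_mono)
    fix y' :: "real \<times> real"
    show "ennreal (mol e y') * ennreal (neglog ((k - fst y') / e))
        \<le> ennreal (M / e\<^sup>2) * ?I (snd y') * ennreal (neglog ((k - fst y') / e))"
    proof (cases "mol e y' = 0")
      case False
      then have "snd y' \<in> {-(e/4)..e/4}" using mol_support(2)[OF e False] by (auto simp: abs_less_iff)
      moreover have "mol e y' \<le> M / e\<^sup>2" by (rule mol_le[OF e M(2)])
      ultimately show ?thesis by (auto intro!: mult_right_mono ennreal_leI)
    qed simp
  qed
  also have "\<dots> = (\<integral>\<^sup>+s. \<integral>\<^sup>+x. ennreal (M / e\<^sup>2) * ?I x * ennreal (neglog ((k - s) / e)) \<partial>lborel \<partial>lborel)"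
    by (subst nn_integral_lborel_iterated) simp_all
  also have "\<dots> = (\<integral>\<^sup>+s. ennreal (M / e\<^sup>2 * (e / 2)) * ennreal (neglog ((k - s) / e)) \<partial>lborel)"
  proof (intro nn_integral_cong)
    fix s
    have "(\<integral>\<^sup>+x. ennreal (M / e\<^sup>2) * ?I x \<partial>lborel) = ennreal (M / e\<^sup>2 * (e / 2))"
      using e M by (simp add: nn_integral_cmult_indicator ennreal_mult[symmetric])
    then show "(\<integral>\<^sup>+x. ennreal (M / e\<^sup>2) * ?I x * ennreal (neglog ((k - s) / e)) \<partial>lborel)
        = ennreal (M / e\<^sup>2 * (e / 2)) * ennreal (neglog ((k - s) / e))"
      by (subst nn_integral_multc) simp_all
  qed
  also have "\<dots> = ennreal (M / e\<^sup>2 * (e / 2)) * (\<integral>\<^sup>+s. ennreal (neglog ((k - s) / e)) \<partial>lborel)"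
    by (rule nn_integral_cmult) measurable
  also have "\<dots> \<le> ennreal (M / e\<^sup>2 * (e / 2)) * ennreal (2 * e)"
    by (intro mult_left_mono nn_integral_neglog_affine e) simp
  also have "\<dots> = ennreal M"
    using e M by (simp add: ennreal_mult[symmetric] power2_eq_square)
  finally show ?thesis .
qed

lemma sum_qmaj_cov_le_neglog_time:
  assumes e: "0 < e" "e < 1" and u: "\<bar>snd u\<bar> < 1" "fst u \<noteq> 0" and C: "0 \<le> C" and L: "1 \<le> L"
  shows "(\<Sum>m\<in>{-2..2::int}. qmaj_cov L C (u + (0, of_int m)))
    \<le> ennreal (cov_const L C - ln e / (2 * pi)) + ennreal (neglog (fst u / e) / (2 * pi))"
proof -
  have tn: "0 < \<bar>fst u\<bar>" "\<bar>fst u\<bar> \<le> \<bar>tnorm u\<bar>"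
    using u(2) dT_nonneg[of "snd u"] by (auto simp: tnorm_def)
  have "ln e / (2 * pi) < 0" using e by (simp add: divide_neg_pos)
  then have "0 \<le> cov_const L C - ln e / (2 * pi)"
    using cov_const_nonneg[OF L C] by linarith
  moreover have "neglog (tnorm u) \<le> - ln e + neglog (fst u / e)"
    using neglog_antimono[OF tn] neglog_scale_le[OF e, of "fst u"] by linarith
  then have "neglog (tnorm u) / (2 * pi) \<le> (- ln e + neglog (fst u / e)) / (2 * pi)"
    by (rule divide_right_mono) simp
  then have "neglog (tnorm u) / (2 * pi) \<le> - ln e / (2 * pi) + neglog (fst u / e) / (2 * pi)"
    by (simp add: diff_divide_distrib)
  ultimately have "ennreal (cov_const L C + neglog (tnorm u) / (2 * pi))
      \<le> ennreal (cov_const L C - ln e / (2 * pi)) + ennreal (neglog (fst u / e) / (2 * pi))"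
    by (simp add: neglog_nonneg ennreal_plus[symmetric] del: ennreal_plus)
  moreover have "0 < tnorm u" using tn tnorm_nonneg[of u] by auto
  ultimately show ?thesis
    using sum_qmaj_cov_translates_le[OF u(1) _ C L] by (blast intro: order_trans)
qed

lemma nn_integral_mol_const_plus_neglog_le:
  assumes e: "0 < e" and K: "0 \<le> K" and M: "0 \<le> M" "\<And>z. \<rho> z \<le> M"
  shows "(\<integral>\<^sup>+y'. ennreal (mol e y') * (ennreal K + ennreal (neglog ((k - fst y') / e) / (2 * pi))) \<partial>lborel)
    \<le> ennreal (K + M / (2 * pi))"
proof -
  have "(\<integral>\<^sup>+y'. ennreal (mol e y') * (ennreal K + ennreal (neglog ((k - fst y') / e) / (2 * pi))) \<partial>lborel)
      = (\<integral>\<^sup>+y'. ennreal K * ennreal (mol e y') + ennreal (1 / (2 * pi))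
          * (ennreal (mol e y') * ennreal (neglog ((k - fst y') / e))) \<partial>lborel)"
  proof (intro nn_integral_cong)
    fix y' :: "real \<times> real"
    have "ennreal (neglog ((k - fst y') / e) / (2 * pi))
        = ennreal (1 / (2 * pi)) * ennreal (neglog ((k - fst y') / e))"
      by (simp add: ennreal_mult[symmetric] neglog_nonneg)
    then show "ennreal (mol e y') * (ennreal K + ennreal (neglog ((k - fst y') / e) / (2 * pi)))
        = ennreal K * ennreal (mol e y') + ennreal (1 / (2 * pi))
          * (ennreal (mol e y') * ennreal (neglog ((k - fst y') / e)))"
      by (simp add: distrib_left ac_simps)
  qed
  also have "\<dots> = ennreal K * (\<integral>\<^sup>+y'. ennreal (mol e y') \<partial>lborel)
      + ennreal (1 / (2 * pi)) * (\<integral>\<^sup>+y'. ennreal (mol e y') * ennreal (neglog ((k - fst y') / e)) \<partial>lborel)"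
    by (subst nn_integral_add) (auto simp: nn_integral_cmult)
  also have "\<dots> \<le> ennreal K * 1 + ennreal (1 / (2 * pi)) * ennreal M"
    using nn_integral_mol[OF e]
    by (intro add_mono mult_left_mono nn_integral_mol_neglog_le[OF e M]) auto
  also have "\<dots> = ennreal (K + M / (2 * pi))"
    using K M by (simp add: ennreal_mult[symmetric] ennreal_plus[symmetric] del: ennreal_plus)
  finally show ?thesis .
qed

lemma smoothed_cov_le_near:
  assumes e: "0 < e" "e < 1" and c: "\<bar>snd c\<bar> \<le> 1/2" and C: "0 \<le> C" and L: "1 \<le> L"
    and M: "0 \<le> M" "\<And>z. \<rho> z \<le> M"
  shows "smoothed_cov L C e c \<le> ennreal (cov_const L C + (M - ln e) / (2 * pi))"
proof -
  define K where "K = cov_const L C - ln e / (2 * pi)"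
  have "ln e / (2 * pi) < 0" using e by (simp add: divide_neg_pos)
  then have K: "0 \<le> K"
    using cov_const_nonneg[OF L C] by (simp add: K_def)
  define h where "h y y' = ennreal (mol e y') * (ennreal K + ennreal (neglog ((fst (c + y) - fst y') / e) / (2 * pi)))" for y y'
  have inner: "(\<integral>\<^sup>+y'. h y y' \<partial>lborel) \<le> ennreal (K + M / (2 * pi))" for y
    unfolding h_def by (rule nn_integral_mol_const_plus_neglog_le[OF e(1) K M])
  have "smoothed_cov L C e c \<le> (\<integral>\<^sup>+y. \<integral>\<^sup>+y'. ennreal (mol e y) * h y y' \<partial>lborel \<partial>lborel)"
    unfolding smoothed_cov_def
  proof (rule nn_integral_mono)
    fix y
    show "(\<integral>\<^sup>+y'. ennreal (mol e y) * ennreal (mol e y')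
        * (\<Sum>m\<in>{-2..2::int}. qmaj_cov L C (c + y - y' + (0, of_int m))) \<partial>lborel)
        \<le> (\<integral>\<^sup>+y'. ennreal (mol e y) * h y y' \<partial>lborel)"
      using AE_lborel_fst_neq[of "fst (c + y)"]
    proof (rule nn_integral_mono_AE[OF eventually_mono])
      fix y' :: "real \<times> real"
      assume y': "fst y' \<noteq> fst (c + y)"
      show "ennreal (mol e y) * ennreal (mol e y')
          * (\<Sum>m\<in>{-2..2::int}. qmaj_cov L C (c + y - y' + (0, of_int m))) \<le> ennreal (mol e y) * h y y'"
      proof (cases "mol e y = 0 \<or> mol e y' = 0")
        case False
        then have "(\<Sum>m\<in>{-2..2::int}. qmaj_cov L C (c + y - y' + (0, of_int m)))
            \<le> ennreal K + ennreal (neglog ((fst (c + y) - fst y') / e) / (2 * pi))"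
          using y' unfolding K_def
          by (intro order_trans[OF sum_qmaj_cov_le_neglog_time[OF e _ _ C L]] abs_snd_add_diff_less_1[OF e c]) auto
        then show ?thesis by (simp add: h_def mult.assoc mult_left_mono)
      qed (auto simp: h_def)
    qed
  qed
  also have "\<dots> = (\<integral>\<^sup>+y. ennreal (mol e y) * (\<integral>\<^sup>+y'. h y y' \<partial>lborel) \<partial>lborel)"
    by (intro nn_integral_cong nn_integral_cmult) (simp add: h_def)
  also have "\<dots> \<le> (\<integral>\<^sup>+y. ennreal (mol e y) * ennreal (K + M / (2 * pi)) \<partial>lborel)"
    by (intro nn_integral_mono mult_left_mono inner) auto
  also have "\<dots> = ennreal (K + M / (2 * pi))"
    using nn_integral_mol[OF e(1)] by (simp add: nn_integral_multc)
  also have "K + M / (2 * pi) = cov_const L C + (M - ln e) / (2 * pi)"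
    by (simp add: K_def diff_divide_distrib)
  finally show ?thesis .
qed


lemma cov_le_near:
  assumes e: "0 < e" "e < 1" and f_nonneg: "\<And>a. 0 \<le> f a"
    and f_le: "\<And>a. a \<in> strip \<Longrightarrow> f a \<le> qmaj L C a" and C: "0 \<le> C" and L: "1 \<le> L"
    and M: "0 \<le> M" "\<And>z. \<rho> z \<le> M"
  shows "(let v = tconv f (rho_eps \<rho> e) in tint (\<lambda>w. v w * v (z + w)))
    \<le> cov_const L C + M / (2 * pi) - ln e / (2 * pi)"
proof -
  have "ln e / (2 * pi) < 0" "0 \<le> M / (2 * pi)" using e M by (simp_all add: divide_neg_pos)
  then have "0 \<le> cov_const L C + (M - ln e) / (2 * pi)"
    using cov_const_nonneg[OF L C] by (simp add: diff_divide_distrib)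
  moreover have "ennreal (let v = tconv f (rho_eps \<rho> e) in tint (\<lambda>w. v w * v (z + w)))
      \<le> ennreal (cov_const L C + (M - ln e) / (2 * pi))"
    using cov_le_smoothed_cov[OF e f_nonneg f_le C]
      smoothed_cov_le_near[OF e abs_snd_snd_round_rem C L M] by (rule order_trans)
  ultimately show ?thesis by (simp add: diff_divide_distrib)
qed

lemma cov_le_far:
  assumes e: "0 < e" "e < 1" and f_nonneg: "\<And>a. 0 \<le> f a"
    and f_le: "\<And>a. a \<in> strip \<Longrightarrow> f a \<le> qmaj L C a" and C: "0 \<le> C" and L: "1 \<le> L"
    and far: "4 * (s0 + 1/4) * e \<le> tnorm z"
  shows "(let v = tconv f (rho_eps \<rho> e) in tint (\<lambda>w. v w * v (z + w)))
    \<le> cov_const L C + neglog (tnorm z - 2 * (s0 + 1/4) * e) / (2 * pi)"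
proof -
  have "0 \<le> cov_const L C + neglog (tnorm z - 2 * (s0 + 1/4) * e) / (2 * pi)"
    using cov_const_nonneg[OF L C] neglog_nonneg by simp
  moreover have "ennreal (let v = tconv f (rho_eps \<rho> e) in tint (\<lambda>w. v w * v (z + w)))
      \<le> ennreal (cov_const L C + neglog (tnorm z - 2 * (s0 + 1/4) * e) / (2 * pi))"
  proof (rule order_trans[OF cov_le_smoothed_cov[OF e f_nonneg f_le C]])
    show "smoothed_cov L C e (snd_round_rem z)
        \<le> ennreal (cov_const L C + neglog (tnorm z - 2 * (s0 + 1/4) * e) / (2 * pi))"
      using smoothed_cov_le_far[OF e abs_snd_snd_round_rem C L] far by (simp only: tnorm_snd_round_rem)
  qed
  ultimately show ?thesis by simp
qed

end

lemma qker_nonneg: "\<forall>t. 0 \<le> H t \<Longrightarrow> 0 \<le> qker T0 H a"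
  by (simp add: qker_def pker_nonneg)

lemma qker_le_qmaj:
  assumes H_range: "\<forall>t. 0 \<le> H t \<and> H t \<le> 1" and H_right: "\<forall>t\<ge>1. H t = 0" and a: "a \<in> strip"
  shows "qker T0 H a \<le> qmaj (T0 + 1) ((T0 + 1) * poisson_images_const) a"
proof -
  obtain t x where a_eq: "a = (t, x)" by (cases a)
  have x: "\<bar>x\<bar> \<le> 1/2" using abs_snd_strip[OF a] by (simp add: a_eq)
  consider "t \<le> 0" | "T0 + 1 \<le> t" | "0 < t" "t < T0 + 1" by linarith
  then show ?thesis
  proof cases
    case 1
    then show ?thesis using poisson_images_const_nonneg by (simp add: a_eq qker_def pker_nonpos_time qmaj_def pbold_nonneg)
  next
    case 2
    then show ?thesis using H_right poisson_images_const_nonneg by (simp add: a_eq qker_def qmaj_def pbold_nonneg)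
  next
    case 3
    have "qker T0 H a \<le> pker (t, x)"
      using H_range pker_nonneg[of "(t, x)"] by (simp add: a_eq qker_def mult_left_le)
    also have "\<dots> \<le> pbold t x + t * poisson_images_const" by (rule pker_le[OF 3(1) x])
    also have "\<dots> \<le> pbold t x + (T0 + 1) * poisson_images_const"
      using 3 poisson_images_const_nonneg by (intro add_left_mono mult_right_mono) auto
    also have "\<dots> = qmaj (T0 + 1) ((T0 + 1) * poisson_images_const) a"
    proof -
      have "x \<in> {-1/2..1/2}" using x unfolding abs_le_iff by simp
      then show ?thesis using 3 by (simp add: a_eq qmaj_def)
    qed
    finally show ?thesis .
  qed
qed

lemma neglog_far_le:
  assumes \<kappa>: "0 < \<kappa>" and e: "0 < e" and far: "4 * \<kappa> * e \<le> n" and R: "n + e \<le> R" "1 \<le> R"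
  shows "neglog (n - 2 * \<kappa> * e) \<le> ln R - ln (2 * \<kappa> / (4 * \<kappa> + 1)) - ln (n + e)"
proof -
  define \<gamma> where "\<gamma> = 2 * \<kappa> / (4 * \<kappa> + 1)"
  have \<gamma>: "0 < \<gamma>" "\<gamma> < 1" using \<kappa> by (auto simp: \<gamma>_def field_simps)
  have "0 < 4 * \<kappa> * e" using \<kappa> e by simp
  then have n: "0 < n + e" "0 < n - 2 * \<kappa> * e" using far e by linarith+
  have "0 \<le> (2 * \<kappa> + 1) * (n - 4 * \<kappa> * e)" using \<kappa> far by simp
  then have "(n + e) * \<gamma> \<le> n - 2 * \<kappa> * e"
    using \<kappa> by (simp add: \<gamma>_def field_simps)
  then have "ln ((n + e) * \<gamma>) \<le> ln (n - 2 * \<kappa> * e)"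
    using n \<gamma> by (subst ln_le_cancel_iff) auto
  then have "ln (n + e) + ln \<gamma> \<le> ln (n - 2 * \<kappa> * e)"
    using n \<gamma> by (simp add: ln_mult_pos)
  moreover have "ln (n + e) \<le> ln R" "0 \<le> ln R" using R n by simp_all
  moreover have "ln \<gamma> < 0" using \<gamma> by simp
  ultimately show ?thesis using n by (simp add: neglog_def \<gamma>_def)
qed

lemma log_two_regime_bound:
  fixes Q :: "real \<Rightarrow> 'a \<Rightarrow> real" and N :: "'a \<Rightarrow> real"
  assumes \<kappa>: "0 < \<kappa>" and N_nonneg: "\<And>z. 0 \<le> N z"
    and near: "\<And>e z. 0 < e \<Longrightarrow> e < 1 \<Longrightarrow> Q e z \<le> A - ln e / (2 * pi)"
    and far: "\<And>e z. 0 < e \<Longrightarrow> e < 1 \<Longrightarrow> 4 * \<kappa> * e \<le> N z \<Longrightarrow>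
        Q e z \<le> B + neglog (N z - 2 * \<kappa> * e) / (2 * pi)"
  shows "\<forall>r>0. \<exists>C0. \<forall>e z. 0 < e \<and> e < 1 \<and> N z \<le> r \<longrightarrow>
    Q e z \<le> - (1 / (2 * pi)) * ln (N z + e) + C0"
proof (intro allI impI)
  fix r :: real
  assume r: "0 < r"
  define D where "D = ln (4 * \<kappa> + 1) + ln (r + 1) - ln (2 * \<kappa> / (4 * \<kappa> + 1))"
  have "2 * \<kappa> / (4 * \<kappa> + 1) < 1" using \<kappa> by (simp add: field_simps)
  then have "ln (2 * \<kappa> / (4 * \<kappa> + 1)) < 0" using \<kappa> by simp
  moreover have "0 \<le> ln (r + 1)" "0 \<le> ln (4 * \<kappa> + 1)" using \<kappa> r by simp_all
  ultimately have D: "ln (4 * \<kappa> + 1) \<le> D" "ln (r + 1) - ln (2 * \<kappa> / (4 * \<kappa> + 1)) \<le> D"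
    unfolding D_def by linarith+
  have "Q e z \<le> max A B + (D - ln (N z + e)) / (2 * pi)" if e: "0 < e" "e < 1" and Nr: "N z \<le> r" for e z
  proof (cases "4 * \<kappa> * e \<le> N z")
    case False
    have "0 < N z + e" using N_nonneg[of z] e by simp
    then have "ln (N z + e) \<le> ln ((4 * \<kappa> + 1) * e)" using False by (simp add: algebra_simps)
    also have "\<dots> = ln (4 * \<kappa> + 1) + ln e" using \<kappa> e by (simp add: ln_mult_pos)
    finally have "- ln e / (2 * pi) \<le> (D - ln (N z + e)) / (2 * pi)"
      using D(1) by (intro divide_right_mono) auto
    then show ?thesis using near[OF e, of z] max.cobounded1[of A B] by simp
  next
    case True
    have "neglog (N z - 2 * \<kappa> * e) \<le> D - ln (N z + e)"
      using neglog_far_le[OF \<kappa> e(1) True, of "r + 1"] Nr e r D(2) by simp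
    then have "neglog (N z - 2 * \<kappa> * e) / (2 * pi) \<le> (D - ln (N z + e)) / (2 * pi)"
      by (intro divide_right_mono) auto
    then show ?thesis using far[OF e True] max.cobounded2[of B A] by simp
  qed
  then show "\<exists>C0. \<forall>e z. 0 < e \<and> e < 1 \<and> N z \<le> r \<longrightarrow> Q e z \<le> - (1 / (2 * pi)) * ln (N z + e) + C0"
    by (intro exI[of _ "max A B + D / (2 * pi)"]) (auto simp: diff_divide_distrib add_diff_eq)
qed

theorem lemma5p4:
  fixes T0 s0 :: real and H :: "real \<Rightarrow> real" and \<rho> :: "real \<times> real \<Rightarrow> real"
  assumes T0: "T0 \<ge> 1"
    and H_smooth: "smooth1 H"
    and H_range: "\<forall>t. 0 \<le> H t \<and> H t \<le> 1"
    and H_left: "\<forall>t\<le>0. H t = 1"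
    and H_right: "\<forall>t\<ge>1. H t = 0"
    and rho_smooth: "smooth2 \<rho>"
    and rho_nonneg: "\<forall>z. 0 \<le> \<rho> z"
    and rho_sym: "\<forall>z. \<rho> (- z) = \<rho> z"
    and rho_int: "(LINT z | lborel. \<rho> z) = 1"
    and s0: "s0 > 0"
    and rho_supp: "closure {z. \<rho> z \<noteq> 0} \<subseteq> {-s0..s0} \<times> {-1/4<..<1/4}"
  shows "\<forall>r>0. \<exists>C0. \<forall>\<epsilon> z. 0 < \<epsilon> \<and> \<epsilon> < 1 \<and> tnorm z \<le> r \<longrightarrow>
           Qeps T0 H \<rho> \<epsilon> z \<le> - (1 / (2 * pi)) * ln (tnorm z + \<epsilon>) + C0"
proof -
  have "continuous_on UNIV \<rho>"
    using rho_smooth unfolding smooth2_def by (metis iter_pd_def fold_Nil id_apply)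
  then interpret mollifier \<rho> s0
    using rho_nonneg rho_supp rho_int s0 by unfold_locales auto
  obtain M where M: "0 \<le> M" "\<And>z. \<rho> z \<le> M" using bounded_above by blast
  define L C where "L = T0 + 1" and "C = L * poisson_images_const"
  have L: "1 \<le> L" and C: "0 \<le> C" using T0 poisson_images_const_nonneg by (auto simp: L_def C_def)
  have q: "0 \<le> qker T0 H a" "a \<in> strip \<Longrightarrow> qker T0 H a \<le> qmaj L C a" for a
    using qker_nonneg[of H T0 a] H_range qker_le_qmaj[OF H_range H_right, of a T0] by (auto simp: L_def C_def)
  show ?thesis
  proof (rule log_two_regime_bound[where Q = "Qeps T0 H \<rho>"])
    show "Qeps T0 H \<rho> e z \<le> cov_const L C + M / (2 * pi) - ln e / (2 * pi)" if "0 < e" "e < 1" for e z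
      unfolding Qeps_def by (intro cov_le_near[OF that _ _ C L M] q)
    show "Qeps T0 H \<rho> e z \<le> cov_const L C + neglog (tnorm z - 2 * (s0 + 1/4) * e) / (2 * pi)"
      if "0 < e" "e < 1" "4 * (s0 + 1/4) * e \<le> tnorm z" for e z
      unfolding Qeps_def by (intro cov_le_far[OF that(1,2) _ _ C L that(3)] q)
  qed (use s0 tnorm_nonneg in auto)
qed

end
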